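(* Let $f$ be a real homogeneous quartic polynomial on $\mathbb{R}^n$ with $|\nabla_x f|^2=16|x|^6$. If $f\in E_{0,n-1}\cup E_{n-1,0}\cup E_{n-2,1}$, then $f$ is primitive.
   Context: $\mathbb{R}^n$ carries the standard Euclidean inner product and norm $|\cdot|$. For nonnegative integers $p,q$ with $p+q=n-1$, we say $f\in E_{p,q}$ if there are orthonormal coordinates $x=(\xi,\eta,x_n)$ on $\mathbb{R}^n$, with $\xi\in\mathbb{R}^p$, $\eta\in\mathbb{R}^q$, $\bar x=(\xi,\eta)$, in which $f(x)=x_n^4+2(|\xi|^2-3|\eta|^2)x_n^2+8\psi(\bar x)x_n+\theta(\bar x)$ for some homogeneous polynomials $\psi$ of degree $3$ and $\theta$ of degree $4$ in $\bar x$. For a linear subspace $H\subseteq\mathbb{R}^n$ with orthogonal projections $\xi_H,\eta_H$ of $x$ onto $H,H^\perp$, set $h_{4,H}(x)=|\xi_H|^4-6|\xi_H|^2|\eta_H|^2+|\eta_H|^4$. A quartic $f$ is primitive if there exist a subspace $H$, $U\in O(n)$ and $\epsilon=\pm1$ with $f(x)=\epsilon\, h_{4,H}(Ux)$ for all $x$. *)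

theory Defs
  imports "HOL-Analysis.Analysis"
begin

definition hom_poly :: "nat \<Rightarrow> 'n::finite set \<Rightarrow> (real^'n \<Rightarrow> real) \<Rightarrow> bool" where
  "hom_poly d S g \<longleftrightarrow>
     (\<exists>c :: 'n list \<Rightarrow> real. \<forall>y.
        g y = (\<Sum>is \<in> {is. length is = d \<and> set is \<subseteq> S}. c is * prod_list (map (\<lambda>i. y $ i) is)))"

definition grad :: "(real^'n::finite \<Rightarrow> real) \<Rightarrow> real^'n \<Rightarrow> real^'n" where
  "grad f x = (\<chi> i. deriv (\<lambda>t. f (x + t *\<^sub>R axis i 1)) 0)"

text \<open>The class E_{p,q}: in orthonormal coordinates y = Q x (Q orthogonal), with the
  coordinate index set split as P (the xi-part, |P| = p), R (the eta-part, |R| = q)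
  and a single index k (the x_n coordinate).\<close>
definition E_class :: "nat \<Rightarrow> nat \<Rightarrow> (real^'n::finite \<Rightarrow> real) \<Rightarrow> bool" where
  "E_class p q f \<longleftrightarrow>
     (\<exists>(Q::real^'n^'n) P R k \<psi> \<theta>.
        orthogonal_matrix Q \<and> P \<inter> R = {} \<and> k \<notin> P \<and> k \<notin> R \<and> P \<union> R \<union> {k} = UNIV \<and>
        card P = p \<and> card R = q \<and>
        hom_poly 3 (P \<union> R) \<psi> \<and> hom_poly 4 (P \<union> R) \<theta> \<and>
        (\<forall>x. let y = Q *v x in
            f x = (y$k)^4 + 2 * ((\<Sum>i\<in>P. (y$i)^2) - 3 * (\<Sum>i\<in>R. (y$i)^2)) * (y$k)^2
                  + 8 * \<psi> y * y$k + \<theta> y))"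

definition proj_onto :: "(real^'n::finite) set \<Rightarrow> real^'n \<Rightarrow> real^'n" where
  "proj_onto H x = (THE p. p \<in> H \<and> (\<forall>h\<in>H. (x - p) \<bullet> h = 0))"

definition h4 :: "(real^'n::finite) set \<Rightarrow> real^'n \<Rightarrow> real" where
  "h4 H x = (let a = norm (proj_onto H x); b = norm (x - proj_onto H x) in
             a^4 - 6 * a^2 * b^2 + b^4)"

definition primitive :: "(real^'n::finite \<Rightarrow> real) \<Rightarrow> bool" where
  "primitive f \<longleftrightarrow>
     (\<exists>H (U::real^'n^'n) (\<epsilon>::real). subspace H \<and> orthogonal_matrix U \<and> (\<epsilon> = 1 \<or> \<epsilon> = -1) \<and>
        (\<forall>x. f x = \<epsilon> * h4 H (U *v x)))"

end

theory Submission
  imports Defs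
begin

text \<open>
  In the adapted coordinates y = Q x write f = F(y) with F = t^4 + 2 A t^2 + 8 \<psi> t + \<theta>,
  where t = y_k and A = |\<xi>|^2 - 3 |\<eta>|^2. Along every line z + t e_k with z_k = 0 the
  eikonal equation is a polynomial identity of degree 6 in t; its coefficients of
  t^0, ..., t^3 are four identities between \<psi>, \<theta> and their gradients on {y_k = 0}.
  Combined with Euler's relation they force \<psi> = 0 and \<theta> = |\<xi>|^4, resp. |\<eta>|^4, when
  the \<eta>-part, resp. the \<xi>-part, is absent; then f is h_4 for H = R^n, resp. for the
  y_k-axis. If the \<eta>-part is one-dimensional, the identities give \<psi> = \<eta> q(\<xi>) with q
  quadratic, determine \<theta> in terms of q, and leave the constraint
  q^2 (|grad q|^2 - 4 |\<xi>|^2) = 0. Either q = 0 and f = h_4 for H = {\<eta> = 0}, or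
  |grad q|^2 = 4 |\<xi>|^2 identically, i.e. the symmetric matrix M of q satisfies M^2 = I,
  and f = -h_4 for H = {y_k = \<eta>, M \<xi> = -\<xi>}.
\<close>

section \<open>Homogeneous polynomials\<close>

definition coord_monomial :: "'n list \<Rightarrow> real^'n::finite \<Rightarrow> real" where
  "coord_monomial is y = prod_list (map (\<lambda>i. y $ i) is)"

lemma finite_lists_length_subset: "finite {is::('n::finite) list. length is = d \<and> set is \<subseteq> S}"
  by (rule finite_subset[OF _ finite_lists_length_eq[of "UNIV::'n set" d]]) auto

lemma hom_poly_induct[consumes 1, case_names zero add smult monomial]:
  assumes "hom_poly d S g"
    and "P (\<lambda>_. 0)"
    and "\<And>g h. P g \<Longrightarrow> P h \<Longrightarrow> P (\<lambda>y. g y + h y)"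
    and "\<And>a g. P g \<Longrightarrow> P (\<lambda>y. a * g y)"
    and "\<And>is. length is = d \<Longrightarrow> set is \<subseteq> S \<Longrightarrow> P (coord_monomial is)"
  shows "P g"
proof -
  let ?L = "{is. length is = d \<and> set is \<subseteq> S}"
  from assms(1) obtain c where c: "\<And>y. g y = (\<Sum>is\<in>?L. c is * coord_monomial is y)"
    unfolding hom_poly_def coord_monomial_def by blast
  have "P (\<lambda>y. \<Sum>is\<in>A. c is * coord_monomial is y)" if A: "A \<subseteq> ?L" for A
  proof -
    have "finite A" using A finite_lists_length_subset finite_subset by blast
    then show ?thesis using A
    proof (induction A rule: finite_induct)
      case empty then show ?case using assms(2) by simp
    next
      case (insert x F)
      then have "P (\<lambda>y. c x * coord_monomial x y)" using assms(4,5) by auto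
      then show ?case using insert assms(3)[of "\<lambda>y. c x * coord_monomial x y"] by simp
    qed
  qed
  moreover have "g = (\<lambda>y. \<Sum>is\<in>?L. c is * coord_monomial is y)"
    using c by auto
  ultimately show ?thesis by simp
qed

lemma hom_poly_zero: "hom_poly d S (\<lambda>_. 0)"
  unfolding hom_poly_def by (rule exI[of _ "\<lambda>_. 0"]) simp

lemma hom_poly_add: "hom_poly d S g \<Longrightarrow> hom_poly d S h \<Longrightarrow> hom_poly d S (\<lambda>y. g y + h y)"
  unfolding hom_poly_def
  apply (elim exE)
  subgoal for c1 c2 by (rule exI[of _ "\<lambda>is. c1 is + c2 is"]) (simp add: sum.distrib algebra_simps)
  done

lemma hom_poly_smult: "hom_poly d S g \<Longrightarrow> hom_poly d S (\<lambda>y. a * g y)"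
  unfolding hom_poly_def
  apply (elim exE)
  subgoal for c by (rule exI[of _ "\<lambda>is. a * c is"]) (simp add: sum_distrib_left algebra_simps)
  done

lemma hom_poly_coord_monomial:
  assumes "length is = d" "set is \<subseteq> S"
  shows "hom_poly d S (coord_monomial is)"
  unfolding hom_poly_def
proof (intro exI[of _ "\<lambda>js. if js = is then 1 else 0"] allI)
  fix y :: "real^'a"
  have "(\<Sum>js\<in>{is. length is = d \<and> set is \<subseteq> S}. (if js = is then 1 else 0) * prod_list (map (($) y) js))
      = (\<Sum>js\<in>{is. length is = d \<and> set is \<subseteq> S}. if js = is then coord_monomial is y else 0)"
    by (intro sum.cong) (auto simp: coord_monomial_def)
  also have "\<dots> = coord_monomial is y"
    using assms by (simp add: sum.delta[OF finite_lists_length_subset])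
  finally show "coord_monomial is y = (\<Sum>js\<in>{is. length is = d \<and> set is \<subseteq> S}.
      (if js = is then 1 else 0) * prod_list (map (($) y) js))" by simp
qed

lemma hom_poly_vars_cong:
  assumes "hom_poly d S g" "\<forall>i\<in>S. y $ i = y' $ i"
  shows "g y = g y'"
  using assms(1)
proof (induction rule: hom_poly_induct)
  case (monomial "is")
  then have "map (\<lambda>i. y $ i) is = map (\<lambda>i. y' $ i) is" using assms(2) by (auto intro: map_cong)
  then show ?case by (simp add: coord_monomial_def del: map_eq_conv)
qed auto

lemma prod_list_map_scale:
  "prod_list (map (\<lambda>i. c * ((y::real^'n::finite) $ i)) is) = c ^ length is * prod_list (map (\<lambda>i. y $ i) is)"
  by (induction "is") simp_all

lemma hom_poly_homogeneous:
  assumes "hom_poly d S g"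
  shows "g (c *\<^sub>R y) = c ^ d * g y"
  using assms
proof (induction rule: hom_poly_induct)
  case (add g h) then show ?case by (simp add: distrib_left)
next
  case (monomial "is") then show ?case by (simp add: coord_monomial_def prod_list_map_scale)
qed auto

lemma coord_differentiable: "(\<lambda>y::real^'n::finite. y $ i) differentiable (at y)"
  by (rule bounded_linear_imp_differentiable) (rule bounded_linear_vec_nth)

lemma coord_monomial_differentiable: "coord_monomial is differentiable (at y)"
proof (induction "is")
  case Nil then show ?case by (simp add: coord_monomial_def)
next
  case (Cons i "is")
  have "coord_monomial (i # is) = (\<lambda>y. y $ i * coord_monomial is y)"
    by (auto simp: coord_monomial_def)
  then show ?case using Cons coord_differentiable by (metis differentiable_mult)
qed

lemma hom_poly_differentiable:
  assumes "hom_poly d S g"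
  shows "g differentiable (at y)"
  using assms
proof (induction rule: hom_poly_induct)
  case (add g h) then show ?case by (intro differentiable_add)
next
  case (smult a g) then show ?case by (intro differentiable_mult) auto
next
  case (monomial "is") show ?case by (rule coord_monomial_differentiable)
qed auto

lemma coord_monomial_split_var:
  "coord_monomial is (y::real^'n::finite)
     = (y $ m) ^ length (filter (\<lambda>i. i = m) is) * coord_monomial (filter (\<lambda>i. i \<noteq> m) is) y"
  by (induction "is") (auto simp: coord_monomial_def algebra_simps)

lemma coord_monomial_expand_var:
  assumes "length is = d" "set is \<subseteq> S"
  shows "\<exists>C. (\<forall>j\<le>d. hom_poly (d - j) (S - {m}) (C j))
           \<and> (\<forall>y. coord_monomial is y = (\<Sum>j\<le>d. (y $ m) ^ j * C j y))"
proof -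
  define c where "c = length (filter (\<lambda>i. i = m) is)"
  define js where "js = filter (\<lambda>i. i \<noteq> m) is"
  have lc: "c + length js = d"
    using sum_length_filter_compl[of "\<lambda>i. i = m" "is"] assms unfolding c_def js_def by simp
  have hj: "hom_poly (d - c) (S - {m}) (coord_monomial js)"
    using assms lc unfolding js_def by (intro hom_poly_coord_monomial) auto
  show ?thesis
  proof (rule exI[of _ "\<lambda>j. if j = c then coord_monomial js else (\<lambda>_. 0)"], intro conjI allI impI)
    fix j assume "j \<le> d"
    then show "hom_poly (d - j) (S - {m}) (if j = c then coord_monomial js else (\<lambda>_. 0))"
      using hj by (auto simp: hom_poly_zero)
  next
    fix y
    have "(\<Sum>j\<le>d. (y $ m) ^ j * (if j = c then coord_monomial js else (\<lambda>_. 0)) y)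
        = (\<Sum>j\<le>d. if j = c then (y $ m) ^ j * coord_monomial js y else 0)"
      by (intro sum.cong) auto
    also have "\<dots> = coord_monomial is y"
      using lc coord_monomial_split_var[of "is" y m] unfolding c_def js_def by (simp add: sum.delta)
    finally show "coord_monomial is y = (\<Sum>j\<le>d. (y $ m) ^ j * (if j = c then coord_monomial js else (\<lambda>_. 0)) y)"
      by simp
  qed
qed

lemma hom_poly_expand_var:
  assumes "hom_poly d S g" "m \<in> S"
  shows "\<exists>C. (\<forall>j\<le>d. hom_poly (d - j) (S - {m}) (C j)) \<and> (\<forall>y. g y = (\<Sum>j\<le>d. (y $ m) ^ j * C j y))"
  using assms(1)
proof (induction rule: hom_poly_induct)
  case zero
  show ?case by (rule exI[of _ "\<lambda>_ _. 0"]) (simp add: hom_poly_zero)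
next
  case (add g h)
  from add.IH obtain C1 C2 where
    "\<forall>j\<le>d. hom_poly (d - j) (S - {m}) (C1 j)" "\<forall>y. g y = (\<Sum>j\<le>d. (y $ m) ^ j * C1 j y)"
    "\<forall>j\<le>d. hom_poly (d - j) (S - {m}) (C2 j)" "\<forall>y. h y = (\<Sum>j\<le>d. (y $ m) ^ j * C2 j y)"
    by blast
  then show ?case
    by (intro exI[of _ "\<lambda>j y. C1 j y + C2 j y"]) (auto intro: hom_poly_add simp: sum.distrib distrib_left)
next
  case (smult a g)
  from smult.IH obtain C where
    "\<forall>j\<le>d. hom_poly (d - j) (S - {m}) (C j)" "\<forall>y. g y = (\<Sum>j\<le>d. (y $ m) ^ j * C j y)"
    by blast
  then show ?case
    by (intro exI[of _ "\<lambda>j y. a * C j y"]) (auto intro: hom_poly_smult simp: sum_distrib_left algebra_simps)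
next
  case (monomial "is")
  then show ?case by (rule coord_monomial_expand_var)
qed

definition partial_deriv :: "(real^'n::finite \<Rightarrow> real) \<Rightarrow> real^'n \<Rightarrow> 'n \<Rightarrow> real" where
  "partial_deriv g y i = deriv (\<lambda>s. g (y + s *\<^sub>R axis i 1)) 0"

lemma grad_nth: "grad f x $ i = partial_deriv f x i"
  by (simp add: grad_def partial_deriv_def)

lemma has_real_derivative_directional_frechet:
  assumes "g differentiable (at y)"
  shows "((\<lambda>s. g (y + s *\<^sub>R v)) has_real_derivative (frechet_derivative g (at y) v)) (at 0)"
proof -
  have g: "(g has_derivative frechet_derivative g (at y)) (at y)"
    using assms frechet_derivative_works by blast
  have l: "((\<lambda>s::real. y + s *\<^sub>R v) has_derivative (\<lambda>s. s *\<^sub>R v)) (at 0)"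
    by (auto intro!: derivative_eq_intros)
  have "((\<lambda>s. g (y + s *\<^sub>R v)) has_derivative (\<lambda>s. frechet_derivative g (at y) (s *\<^sub>R v))) (at 0)"
    using has_derivative_compose[OF l, of g] g by simp
  moreover have "linear (frechet_derivative g (at y))"
    using assms linear_frechet_derivative by blast
  ultimately show ?thesis
    by (intro has_derivative_imp_has_field_derivative) (auto simp: linear_scale)
qed

lemma partial_deriv_eq_frechet:
  assumes "g differentiable (at y)"
  shows "partial_deriv g y i = frechet_derivative g (at y) (axis i 1)"
  unfolding partial_deriv_def using has_real_derivative_directional_frechet[OF assms] by (rule DERIV_imp_deriv)

lemma has_real_derivative_partial_deriv:
  assumes "g differentiable (at y)"
  shows "((\<lambda>s. g (y + s *\<^sub>R axis j 1)) has_real_derivative partial_deriv g y j) (at 0)"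
  using has_real_derivative_directional_frechet[OF assms] partial_deriv_eq_frechet[OF assms] by simp

lemma has_real_derivative_directional:
  assumes "g differentiable (at y)"
  shows "((\<lambda>s. g (y + s *\<^sub>R v)) has_real_derivative (\<Sum>i\<in>UNIV. v $ i * partial_deriv g y i)) (at 0)"
proof -
  have lin: "linear (frechet_derivative g (at y))"
    using assms linear_frechet_derivative by blast
  have "frechet_derivative g (at y) v = frechet_derivative g (at y) (\<Sum>i\<in>UNIV. v $ i *\<^sub>R axis i 1)"
    using basis_expansion[of v] by (simp add: scalar_mult_eq_scaleR)
  also have "\<dots> = (\<Sum>i\<in>UNIV. v $ i * frechet_derivative g (at y) (axis i 1))"
    using lin by (simp add: linear_sum linear_scale)
  finally show ?thesis
    using has_real_derivative_directional_frechet[OF assms, of v] partial_deriv_eq_frechet[OF assms] by simp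
qed

lemma partial_deriv_eqI:
  "((\<lambda>s. g (y + s *\<^sub>R axis j 1)) has_real_derivative D) (at 0) \<Longrightarrow> partial_deriv g y j = D"
  unfolding partial_deriv_def by (rule DERIV_imp_deriv)

lemma partial_deriv_cong:
  assumes "\<And>s. g (y + s *\<^sub>R axis j 1) = h (y' + s *\<^sub>R axis j 1)"
  shows "partial_deriv g y j = partial_deriv h y' j"
proof -
  have "(\<lambda>s. g (y + s *\<^sub>R axis j 1)) = (\<lambda>s. h (y' + s *\<^sub>R axis j 1))"
    using assms by (rule ext)
  then show ?thesis by (simp add: partial_deriv_def)
qed

lemma partial_deriv_zero_fun: "(\<And>y. g y = 0) \<Longrightarrow> partial_deriv g y j = 0"
  unfolding partial_deriv_def by simp

lemma partial_deriv_hom_poly_outside: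
  assumes "hom_poly d S g" "j \<notin> S"
  shows "partial_deriv g y j = 0"
proof -
  have "partial_deriv g y j = partial_deriv (\<lambda>_. g y) y j"
    using assms(2) by (intro partial_deriv_cong hom_poly_vars_cong[OF assms(1)]) (auto simp: axis_def)
  then show ?thesis unfolding partial_deriv_def by simp
qed

lemma partial_deriv_hom_poly_vars_cong:
  assumes "hom_poly d S g" "\<forall>i\<in>S. y $ i = y' $ i"
  shows "partial_deriv g y j = partial_deriv g y' j"
  using assms(2) by (intro partial_deriv_cong hom_poly_vars_cong[OF assms(1)]) auto

lemma hom_poly_euler:
  assumes "hom_poly d S g"
  shows "(\<Sum>i\<in>S. y $ i * partial_deriv g y i) = d * g y"
proof -
  have "((\<lambda>s. g (y + s *\<^sub>R y)) has_real_derivative (\<Sum>i\<in>UNIV. y $ i * partial_deriv g y i)) (at 0)"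
    by (rule has_real_derivative_directional[OF hom_poly_differentiable[OF assms]])
  moreover have "(\<lambda>s. g (y + s *\<^sub>R y)) = (\<lambda>s. (1 + s) ^ d * g y)"
  proof
    fix s
    have "y + s *\<^sub>R y = (1 + s) *\<^sub>R y" by (simp add: algebra_simps)
    then show "g (y + s *\<^sub>R y) = (1 + s) ^ d * g y" using hom_poly_homogeneous[OF assms] by simp
  qed
  moreover have "((\<lambda>s. (1 + s) ^ d * g y) has_real_derivative (d * g y)) (at 0)"
    by (auto intro!: derivative_eq_intros)
  ultimately have "(\<Sum>i\<in>UNIV. y $ i * partial_deriv g y i) = d * g y"
    using DERIV_unique by metis
  moreover have "(\<Sum>i\<in>UNIV. y $ i * partial_deriv g y i) = (\<Sum>i\<in>S. y $ i * partial_deriv g y i)"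
    using partial_deriv_hom_poly_outside[OF assms] by (intro sum.mono_neutral_right) auto
  ultimately show ?thesis by simp
qed

lemma has_real_derivative_sum_squares:
  assumes "finite A"
  shows "((\<lambda>s. \<Sum>i\<in>A. ((y + s *\<^sub>R axis j 1) $ i)^2) has_real_derivative
           (if j \<in> A then 2 * y $ j else 0)) (at 0)"
proof -
  have "((\<lambda>s. \<Sum>i\<in>A. ((y + s *\<^sub>R axis j 1) $ i)^2) has_real_derivative
          (\<Sum>i\<in>A. if i = j then 2 * y $ j else 0)) (at 0)"
  proof (rule DERIV_sum)
    fix i
    have "((\<lambda>s. (y $ i + s * (if i = j then 1 else 0))^2) has_real_derivative
            (2 * (y $ i + 0 * (if i = j then 1 else 0)) * (if i = j then 1 else 0))) (at 0)"
      by (auto intro!: derivative_eq_intros)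
    then show "((\<lambda>s. ((y + s *\<^sub>R axis j 1) $ i)^2) has_real_derivative (if i = j then 2 * y $ j else 0)) (at 0)"
      by (cases "i = j") (auto simp: axis_def)
  qed
  then show ?thesis using assms by (simp add: sum.delta')
qed

section \<open>Symmetric quadratic forms\<close>

lemma finite_quadratic_roots:
  fixes c0 c1 c2 :: real
  assumes "c0 \<noteq> 0 \<or> c2 \<noteq> 0"
  shows "finite {s. c0 + c1 * s + c2 * s^2 = 0}"
proof -
  let ?c = "\<lambda>i. [c0, c1, c2] ! i"
  have e: "{s. c0 + c1 * s + c2 * s^2 = 0} = {s. (\<Sum>i\<le>2. ?c i * s^i) = 0}"
    by (simp add: numeral_eq_Suc atMost_Suc algebra_simps)
  have "\<exists>i\<le>2. ?c i \<noteq> 0" using assms by (metis le_refl nth_Cons_0 nth_Cons_Suc numeral_2_eq_2 zero_le)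
  then show ?thesis unfolding e using polyfun_finite_roots by blast
qed

lemma coord_product_sym_matrix:
  fixes y :: "real^'n::finite"
  assumes aS: "a \<in> S" and bS: "b \<in> S"
  defines "M \<equiv> \<lambda>i j. ((if i = a \<and> j = b then 1 else 0) + (if i = b \<and> j = a then 1 else 0)) / (2::real)"
  shows "(\<Sum>i\<in>S. \<Sum>j\<in>S. M i j * (y$i * y$j)) = y$a * y$b"
proof -
  have "(\<Sum>j\<in>S. M i j * (y$i * y$j)) = ((if i = a then y$a * y$b else 0) + (if i = b then y$a * y$b else 0)) / 2"
    for i
  proof -
    have "(\<Sum>j\<in>S. M i j * (y$i * y$j)) = (\<Sum>j\<in>S. (if j = b then (if i = a then y$a * y$b else 0) / 2 else 0)
              + (if j = a then (if i = b then y$a * y$b else 0) / 2 else 0))"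
      unfolding M_def by (intro sum.cong refl) (auto simp: field_simps)
    then show ?thesis using aS bS by (simp add: sum.distrib add_divide_distrib)
  qed
  then have "(\<Sum>i\<in>S. \<Sum>j\<in>S. M i j * (y$i * y$j))
      = (\<Sum>i\<in>S. ((if i = a then y$a * y$b else 0) + (if i = b then y$a * y$b else 0)) / 2)"
    by (intro sum.cong) auto
  then show ?thesis using aS bS by (simp add: sum.distrib sum_divide_distrib[symmetric])
qed

lemma hom_poly_2_sym_matrix:
  assumes "hom_poly 2 S g"
  obtains M :: "'n::finite \<Rightarrow> 'n \<Rightarrow> real"
  where "\<And>i j. M i j = M j i" "\<And>y::real^'n. g y = (\<Sum>i\<in>S. \<Sum>j\<in>S. M i j * (y$i * y$j))"
proof -
  have "\<exists>M::'n \<Rightarrow> 'n \<Rightarrow> real. (\<forall>i j. M i j = M j i) \<and> (\<forall>y::real^'n. g y = (\<Sum>i\<in>S. \<Sum>j\<in>S. M i j * (y$i * y$j)))"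
    using assms
  proof (induction rule: hom_poly_induct)
    case zero show ?case by (rule exI[of _ "\<lambda>_ _. 0"]) simp
  next
    case (add g h)
    then obtain M1 M2 where "\<forall>i j. M1 i j = M1 j i" "\<forall>y. g y = (\<Sum>i\<in>S. \<Sum>j\<in>S. M1 i j * (y$i * y$j))"
      "\<forall>i j. M2 i j = M2 j i" "\<forall>y. h y = (\<Sum>i\<in>S. \<Sum>j\<in>S. M2 i j * (y$i * y$j))" by blast
    then show ?case
      by (intro exI[of _ "\<lambda>i j. M1 i j + M2 i j"]) (simp add: sum.distrib distrib_right)
  next
    case (smult a g)
    then obtain M1 where "\<forall>i j. M1 i j = M1 j i" "\<forall>y. g y = (\<Sum>i\<in>S. \<Sum>j\<in>S. M1 i j * (y$i * y$j))"
      by blast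
    then show ?case
      by (intro exI[of _ "\<lambda>i j. a * M1 i j"]) (simp add: sum_distrib_left mult.assoc)
  next
    case (monomial "is")
    then obtain a b where "is = [a, b]" "a \<in> S" "b \<in> S"
      by (auto simp: length_Suc_conv numeral_2_eq_2)
    moreover define M :: "'n \<Rightarrow> 'n \<Rightarrow> real"
      where "M = (\<lambda>i j. ((if i = a \<and> j = b then 1 else 0) + (if i = b \<and> j = a then 1 else 0)) / 2)"
    moreover have "M i j = M j i" for i j
      unfolding M_def by (cases "i = a"; cases "j = b"; cases "i = b"; cases "j = a") simp_all
    ultimately show ?case
      using coord_product_sym_matrix[of a S b] by (intro exI[of _ M]) (simp add: coord_monomial_def)
  qed
  then show ?thesis using that by blast
qed

locale sym_quadratic_form =
  fixes S :: "'n::finite set" and M :: "'n \<Rightarrow> 'n \<Rightarrow> real" and g :: "real^'n \<Rightarrow> real"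
  assumes M_sym: "\<And>i j. M i j = M j i"
    and g_eq: "\<And>y. g y = (\<Sum>i\<in>S. \<Sum>j\<in>S. M i j * (y$i * y$j))"
begin

definition Mv :: "real^'n \<Rightarrow> 'n \<Rightarrow> real" where "Mv y j = (\<Sum>l\<in>S. M j l * y$l)"

definition bilin :: "real^'n \<Rightarrow> real^'n \<Rightarrow> real" where "bilin a b = (\<Sum>i\<in>S. a$i * Mv b i)"

definition defect :: "real^'n \<Rightarrow> real" where
  "defect y = (\<Sum>j\<in>S. (Mv y j)^2) - (\<Sum>j\<in>S. (y$j)^2)"

definition defect_polar :: "real^'n \<Rightarrow> real^'n \<Rightarrow> real" where
  "defect_polar a b = (\<Sum>j\<in>S. Mv a j * Mv b j) - (\<Sum>j\<in>S. a$j * b$j)"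

lemma Mv_add_scale: "Mv (a + s *\<^sub>R b) j = Mv a j + s * Mv b j"
  unfolding Mv_def by (simp add: algebra_simps sum.distrib sum_distrib_left)

lemma Mv_diff: "Mv (a - b) j = Mv a j - Mv b j"
  using Mv_add_scale[of a "-1" b j] by simp

lemma Mv_scale: "Mv (c *\<^sub>R a) j = c * Mv a j"
  using Mv_add_scale[of 0 c a j] by (simp add: Mv_def)

lemma bilin_sym: "bilin a b = bilin b a"
proof -
  have "bilin a b = (\<Sum>i\<in>S. \<Sum>l\<in>S. M i l * (a$i * b$l))"
    unfolding bilin_def Mv_def by (simp add: sum_distrib_left mult_ac)
  also have "\<dots> = (\<Sum>l\<in>S. \<Sum>i\<in>S. M i l * (a$i * b$l))" by (rule sum.swap)
  also have "\<dots> = bilin b a"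
    unfolding bilin_def Mv_def by (simp add: sum_distrib_left mult_ac M_sym)
  finally show ?thesis .
qed

lemma g_bilin: "g y = bilin y y"
  unfolding g_eq bilin_def Mv_def by (simp add: sum_distrib_left mult_ac)

lemma bilin_add_scale_left: "bilin (a + s *\<^sub>R b) c = bilin a c + s * bilin b c"
  unfolding bilin_def by (simp add: algebra_simps sum.distrib sum_distrib_left)

lemma bilin_add_scale_right: "bilin c (a + s *\<^sub>R b) = bilin c a + s * bilin c b"
  using bilin_add_scale_left bilin_sym by metis

lemma g_add_scale: "g (a + s *\<^sub>R b) = g a + 2 * s * bilin a b + s^2 * g b"
  unfolding g_bilin bilin_add_scale_left bilin_add_scale_right
  using bilin_sym[of a b] by (simp add: algebra_simps power2_eq_square)

lemma partial_deriv_g: assumes "j \<in> S" shows "partial_deriv g y j = 2 * Mv y j"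
proof (rule partial_deriv_eqI)
  have "bilin y (axis j 1) = (\<Sum>i\<in>S. (axis j 1)$i * Mv y i)"
    using bilin_sym[of y "axis j 1"] unfolding bilin_def by simp
  also have "\<dots> = (\<Sum>i\<in>S. if i = j then Mv y i else 0)" by (intro sum.cong) (auto simp: axis_def)
  also have "\<dots> = Mv y j" using assms by (simp add: sum.delta')
  finally have "(\<lambda>s. g (y + s *\<^sub>R axis j 1)) = (\<lambda>s. g y + 2 * s * Mv y j + s^2 * g (axis j 1))"
    using g_add_scale by auto
  moreover have "((\<lambda>s. g y + 2 * s * Mv y j + s^2 * g (axis j 1)) has_real_derivative 2 * Mv y j) (at 0)"
    by (auto intro!: derivative_eq_intros)
  ultimately show "((\<lambda>s. g (y + s *\<^sub>R axis j 1)) has_real_derivative 2 * Mv y j) (at 0)" by simp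
qed

lemma defect_add_scale: "defect (a + s *\<^sub>R b) = defect a + 2 * s * defect_polar a b + s^2 * defect b"
  unfolding defect_def defect_polar_def Mv_add_scale
  by (simp add: power2_eq_square algebra_simps sum.distrib sum_distrib_left sum_subtractf)

text \<open>Along the line a + s b both g and the defect are quadratic in s; the first has constant
  term g a \<noteq> 0, the second leading coefficient defect b, so if both were nonzero
  their product could not vanish for all s.\<close>

lemma defect_eq_0_if_g_sq_defect:
  assumes a: "g a \<noteq> 0" and h: "\<And>y. (g y)^2 * defect y = 0"
  shows "defect b = 0"
proof (rule ccontr)
  assume nb: "defect b \<noteq> 0"
  let ?Z1 = "{s. g a + (2 * bilin a b) * s + g b * s^2 = 0}"
  let ?Z2 = "{s. defect a + (2 * defect_polar a b) * s + defect b * s^2 = 0}"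
  have "UNIV \<subseteq> ?Z1 \<union> ?Z2"
  proof
    fix s :: real
    have "g (a + s *\<^sub>R b) = 0 \<or> defect (a + s *\<^sub>R b) = 0" using h[of "a + s *\<^sub>R b"] by simp
    then show "s \<in> ?Z1 \<union> ?Z2"
      unfolding g_add_scale defect_add_scale by (auto simp: algebra_simps)
  qed
  moreover have "finite ?Z1" "finite ?Z2"
    using a nb by (auto intro: finite_quadratic_roots)
  ultimately show False using infinite_UNIV_char_0 finite_subset by blast
qed

end

locale sym_quadratic_form_isometric = sym_quadratic_form +
  assumes defect_eq_0: "\<And>y. defect y = 0"
begin

lemma sum_Mv_sq: "(\<Sum>j\<in>S. (Mv y j)^2) = (\<Sum>j\<in>S. (y$j)^2)"
  using defect_eq_0[of y] unfolding defect_def by simp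

text \<open>A symmetric isometry is an involution: for r = M (M y) - y on S, |r|^2 is the polar
  form of the defect at y and r.\<close>

lemma M_Mv: assumes j: "j \<in> S" shows "(\<Sum>l\<in>S. M j l * Mv y l) = y $ j"
proof -
  define r where "r = (\<chi> j. if j \<in> S then (\<Sum>l\<in>S. M j l * Mv y l) - y $ j else 0)"
  have "(\<Sum>j\<in>S. (\<Sum>l\<in>S. M j l * Mv y l) * r$j) = (\<Sum>j\<in>S. \<Sum>l\<in>S. M j l * Mv y l * r$j)"
    by (simp add: sum_distrib_right)
  also have "\<dots> = (\<Sum>l\<in>S. \<Sum>j\<in>S. M j l * Mv y l * r$j)" by (rule sum.swap)
  also have "\<dots> = (\<Sum>l\<in>S. Mv y l * Mv r l)"
    unfolding Mv_def[of r] by (simp add: sum_distrib_left mult_ac M_sym)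
  finally have "(\<Sum>j\<in>S. (\<Sum>l\<in>S. M j l * Mv y l) * r$j) = (\<Sum>l\<in>S. Mv y l * Mv r l)" .
  moreover have "(\<Sum>j\<in>S. r$j * r$j) = (\<Sum>j\<in>S. (\<Sum>l\<in>S. M j l * Mv y l) * r$j - y$j * r$j)"
    by (intro sum.cong refl) (simp add: r_def algebra_simps)
  ultimately have "(\<Sum>j\<in>S. r$j * r$j) = defect_polar y r"
    unfolding defect_polar_def by (simp add: sum_subtractf)
  also have "\<dots> = 0" using defect_add_scale[of y 1 r] defect_eq_0 by simp
  finally have "\<forall>j\<in>S. r$j * r$j = 0"
    by (subst (asm) sum_nonneg_eq_0_iff) auto
  then show ?thesis using j unfolding r_def by simp
qed

text \<open>On S, p is the projection of y onto the (-1)-eigenspace of M.\<close>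

context
  fixes y p
  assumes p_S: "\<And>i. i \<in> S \<Longrightarrow> p $ i = (y $ i - Mv y i) / 2"
begin

lemma Mv_anti_part: "j \<in> S \<Longrightarrow> Mv p j = - p $ j"
proof -
  assume j: "j \<in> S"
  have "Mv p j = (\<Sum>l\<in>S. M j l * ((y$l - Mv y l) / 2))"
    unfolding Mv_def[of p j] by (intro sum.cong refl) (simp add: p_S)
  also have "\<dots> = (Mv y j - (\<Sum>l\<in>S. M j l * Mv y l)) / 2"
    unfolding Mv_def[of y j] by (simp add: sum_subtractf sum_divide_distrib[symmetric] algebra_simps)
  finally show ?thesis using M_Mv[OF j] p_S[OF j] by simp
qed

lemma sum_sq_anti_part: "(\<Sum>i\<in>S. (p$i)^2) = ((\<Sum>i\<in>S. (y$i)^2) - g y) / 2"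
proof -
  have "(\<Sum>i\<in>S. (p$i)^2) = (\<Sum>i\<in>S. ((y$i)^2 - 2 * (y$i * Mv y i) + (Mv y i)^2) / 4)"
    by (intro sum.cong refl) (simp add: p_S power2_eq_square field_simps)
  then show ?thesis
    unfolding g_bilin bilin_def using sum_Mv_sq[of y]
    by (simp add: sum.distrib sum_subtractf sum_divide_distrib[symmetric] sum_distrib_left[symmetric])
qed

lemma sum_sq_sym_part: "(\<Sum>i\<in>S. ((y - p)$i)^2) = ((\<Sum>i\<in>S. (y$i)^2) + g y) / 2"
proof -
  have "(\<Sum>i\<in>S. ((y - p)$i)^2) = (\<Sum>i\<in>S. ((y$i)^2 + 2 * (y$i * Mv y i) + (Mv y i)^2) / 4)"
    by (intro sum.cong refl) (simp add: p_S power2_eq_square field_simps)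
  then show ?thesis
    unfolding g_bilin bilin_def using sum_Mv_sq[of y]
    by (simp add: sum.distrib sum_divide_distrib[symmetric] sum_distrib_left[symmetric])
qed

lemma sym_part_orthogonal:
  assumes "\<And>j. j \<in> S \<Longrightarrow> Mv h j = - h $ j"
  shows "(\<Sum>j\<in>S. (y - p)$j * h$j) = 0"
proof -
  have "(\<Sum>j\<in>S. (y - p)$j * h$j) = (\<Sum>j\<in>S. (y$j * h$j + h$j * Mv y j) / 2)"
    by (intro sum.cong refl) (simp add: p_S field_simps)
  also have "\<dots> = ((\<Sum>j\<in>S. y$j * h$j) + (\<Sum>j\<in>S. h$j * Mv y j)) / 2"
    by (simp add: sum.distrib sum_divide_distrib[symmetric])
  also have "(\<Sum>j\<in>S. h$j * Mv y j) = (\<Sum>j\<in>S. y$j * Mv h j)"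
    using bilin_sym[of h y] unfolding bilin_def .
  also have "\<dots> = - (\<Sum>j\<in>S. y$j * h$j)" by (simp add: assms sum_negf)
  finally show ?thesis by simp
qed

end

end

lemma proj_onto_eqI:
  assumes H: "\<forall>u\<in>H. \<forall>v\<in>H. u - v \<in> H" and p: "p \<in> H" and o: "\<forall>h\<in>H. (x - p) \<bullet> h = 0"
  shows "proj_onto H x = p"
  unfolding proj_onto_def
proof (rule the_equality)
  show "p \<in> H \<and> (\<forall>h\<in>H. (x - p) \<bullet> h = 0)" using p o by blast
next
  fix p' assume p': "p' \<in> H \<and> (\<forall>h\<in>H. (x - p') \<bullet> h = 0)"
  then have "p - p' \<in> H" using H p by blast
  then have "(x - p) \<bullet> (p - p') = 0" "(x - p') \<bullet> (p - p') = 0" using o p' by blast+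
  then have "(p - p') \<bullet> (p - p') = 0" by (simp add: inner_diff_left)
  then show "p' = p" by simp
qed

lemma h4_UNIV: "h4 UNIV x = (norm x)^4"
proof -
  have "proj_onto UNIV x = x" by (rule proj_onto_eqI) auto
  then show ?thesis by (simp add: h4_def Let_def)
qed

lemma h4_eq_proj:
  assumes "proj_onto H y = p"
  shows "h4 H y = ((norm p)^2)^2 - 6 * (norm p)^2 * (norm (y - p))^2 + ((norm (y - p))^2)^2"
  using assms by (simp add: h4_def Let_def power_mult[symmetric])

lemma norm_orthogonal_matrix_mult:
  assumes "orthogonal_matrix (U::real^'n::finite^'n)"
  shows "norm (U *v x) = norm x"
proof -
  have "orthogonal_transformation (\<lambda>x. U *v x)"
    using assms by (simp add: orthogonal_transformation_matrix matrix_of_matrix_vector_mul)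
  then show ?thesis by (rule orthogonal_transformation_norm)
qed

lemma orthogonal_matrix_mult_transpose:
  assumes "orthogonal_matrix (U::real^'n::finite^'n)"
  shows "U *v (transpose U *v y) = y"
  using assms by (metis matrix_vector_mul_assoc matrix_vector_mul_lid orthogonal_matrix_def)

lemma norm_sq_eq_sum: "(norm (x::real^'n::finite))^2 = (\<Sum>i\<in>UNIV. (x $ i)^2)"
  unfolding power2_norm_eq_inner by (simp add: inner_vec_def power2_eq_square)

lemma real_poly6_coeffs_eq_0:
  fixes c0 c1 c2 c3 c4 c5 c6 :: real
  assumes "\<And>t. c0 + c1 * t + c2 * t^2 + c3 * t^3 + c4 * t^4 + c5 * t^5 + c6 * t^6 = 0"
  shows "c0 = 0 \<and> c1 = 0 \<and> c2 = 0 \<and> c3 = 0 \<and> c4 = 0 \<and> c5 = 0 \<and> c6 = 0"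
proof -
  let ?c = "\<lambda>i. [c0, c1, c2, c3, c4, c5, c6] ! i"
  have "(\<Sum>i\<le>6. ?c i * t^i) = c0 + c1 * t + c2 * t^2 + c3 * t^3 + c4 * t^4 + c5 * t^5 + c6 * t^6"
    for t :: real by (simp add: numeral_eq_Suc atMost_Suc)
  then have "\<forall>t. (\<Sum>i\<le>6. ?c i * t^i) = 0" using assms by simp
  then have "\<forall>i\<le>6. ?c i = 0" by (subst (asm) polyfun_eq_0)
  then have "\<And>i. i \<le> 6 \<Longrightarrow> ?c i = 0" by blast
  from this[of 0] this[of 1] this[of 2] this[of 3] this[of 4] this[of 5] this[of 6]
  show ?thesis by (simp add: numeral_eq_Suc)
qed

lemma sum_quadratic_sq:
  fixes t :: real
  shows "(\<Sum>j\<in>A. (a j * t^2 + b j * t + c j)^2) =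
    t^4 * (\<Sum>j\<in>A. (a j)^2) + t^3 * (2 * (\<Sum>j\<in>A. a j * b j))
    + t^2 * ((\<Sum>j\<in>A. (b j)^2) + 2 * (\<Sum>j\<in>A. a j * c j))
    + t * (2 * (\<Sum>j\<in>A. b j * c j)) + (\<Sum>j\<in>A. (c j)^2)"
proof -
  have "\<And>j. (a j * t^2 + b j * t + c j)^2 = t^4 * (a j)^2 + t^3 * (2 * (a j * b j))
    + t^2 * ((b j)^2 + 2 * (a j * c j)) + t * (2 * (b j * c j)) + (c j)^2"
    by (simp add: power2_eq_square power3_eq_cube power4_eq_xxxx algebra_simps)
  then show ?thesis
    by (simp add: sum.distrib sum_distrib_left[symmetric] distrib_left)
qed

lemma sextic_sum_sq_coeffs:
  fixes A N p :: real
  assumes "\<And>t. (4 * t^3 + 4 * A * t + 8 * p)^2 + (\<Sum>j\<in>I. (a j * t^2 + b j * t + c j)^2)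
      + (\<Sum>j\<in>J. (a' j * t^2 + b j * t + c j)^2) = 16 * (t^2 + N)^3"
  shows "64 * p + 2 * (\<Sum>j\<in>I. a j * b j) + 2 * (\<Sum>j\<in>J. a' j * b j) = 0"
    and "16 * A^2 + (\<Sum>j\<in>I. (b j)^2) + 2 * (\<Sum>j\<in>I. a j * c j) + (\<Sum>j\<in>J. (b j)^2)
         + 2 * (\<Sum>j\<in>J. a' j * c j) = 48 * N^2"
    and "64 * A * p + 2 * (\<Sum>j\<in>I. b j * c j) + 2 * (\<Sum>j\<in>J. b j * c j) = 0"
    and "64 * p^2 + (\<Sum>j\<in>I. (c j)^2) + (\<Sum>j\<in>J. (c j)^2) = 16 * N^3"
proof -
  have "(64 * p^2 + (\<Sum>j\<in>I. (c j)^2) + (\<Sum>j\<in>J. (c j)^2) - 16 * N^3)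
     + (64 * A * p + 2 * (\<Sum>j\<in>I. b j * c j) + 2 * (\<Sum>j\<in>J. b j * c j)) * t
     + (16 * A^2 + (\<Sum>j\<in>I. (b j)^2) + 2 * (\<Sum>j\<in>I. a j * c j) + (\<Sum>j\<in>J. (b j)^2)
        + 2 * (\<Sum>j\<in>J. a' j * c j) - 48 * N^2) * t^2
     + (64 * p + 2 * (\<Sum>j\<in>I. a j * b j) + 2 * (\<Sum>j\<in>J. a' j * b j)) * t^3
     + (32 * A + (\<Sum>j\<in>I. (a j)^2) + (\<Sum>j\<in>J. (a' j)^2) - 48 * N) * t^4 + 0 * t^5 + 0 * t^6 = 0" for t
    using assms[of t] unfolding sum_quadratic_sq by algebra
  from real_poly6_coeffs_eq_0[OF this] show
    "64 * p + 2 * (\<Sum>j\<in>I. a j * b j) + 2 * (\<Sum>j\<in>J. a' j * b j) = 0"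
    "16 * A^2 + (\<Sum>j\<in>I. (b j)^2) + 2 * (\<Sum>j\<in>I. a j * c j) + (\<Sum>j\<in>J. (b j)^2)
       + 2 * (\<Sum>j\<in>J. a' j * c j) = 48 * N^2"
    "64 * A * p + 2 * (\<Sum>j\<in>I. b j * c j) + 2 * (\<Sum>j\<in>J. b j * c j) = 0"
    "64 * p^2 + (\<Sum>j\<in>I. (c j)^2) + (\<Sum>j\<in>J. (c j)^2) = 16 * N^3"
    by simp_all
qed

section \<open>The eikonal equation for a quartic of class E_{p,q}\<close>

locale eikonal_E_form =
  fixes f :: "real^'n::finite \<Rightarrow> real" and Q :: "real^'n^'n" and P R :: "'n set" and k :: 'n
    and \<psi> \<theta> :: "real^'n \<Rightarrow> real"
  assumes orth: "orthogonal_matrix Q" and disj: "P \<inter> R = {}" and kP: "k \<notin> P" and kR: "k \<notin> R"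
    and cover: "P \<union> R \<union> {k} = UNIV"
    and hom_psi: "hom_poly 3 (P \<union> R) \<psi>" and hom_theta: "hom_poly 4 (P \<union> R) \<theta>"
    and f_eq: "\<forall>x. let y = Q *v x in
            f x = (y$k)^4 + 2 * ((\<Sum>i\<in>P. (y$i)^2) - 3 * (\<Sum>i\<in>R. (y$i)^2)) * (y$k)^2
                  + 8 * \<psi> y * y$k + \<theta> y"
    and eikonal: "\<forall>x. (norm (grad f x))^2 = 16 * (norm x)^6"
begin

definition F :: "real^'n \<Rightarrow> real" where
  "F y = (y$k)^4 + 2 * ((\<Sum>i\<in>P. (y$i)^2) - 3 * (\<Sum>i\<in>R. (y$i)^2)) * (y$k)^2 + 8 * \<psi> y * y$k + \<theta> y"

lemma f_eq_F: "f x = F (Q *v x)"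
  using f_eq by (simp add: Let_def F_def)

lemma k_notin_PR: "k \<notin> P \<union> R" using kP kR by auto

lemma sum_UNIV_split: "(\<Sum>j\<in>UNIV. g j) = g k + (\<Sum>j\<in>P. g j) + (\<Sum>j\<in>R. g j)"
proof -
  have "UNIV = insert k (P \<union> R)" using cover by auto
  then have "(\<Sum>j\<in>UNIV. g j) = (\<Sum>j\<in>insert k (P \<union> R). g j)" by simp
  also have "\<dots> = g k + (\<Sum>j\<in>P \<union> R. g j)"
    using k_notin_PR by (simp add: finite_UnI)
  finally have "(\<Sum>j\<in>UNIV. g j) = g k + (\<Sum>j\<in>P \<union> R. g j)" .
  then show ?thesis using disj by (simp add: sum.union_disjoint add.assoc)
qed

lemma norm_sq_split: "(norm y)^2 = (y$k)^2 + (\<Sum>i\<in>P. (y$i)^2) + (\<Sum>i\<in>R. (y$i)^2)"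
  using norm_sq_eq_sum[of y] sum_UNIV_split[of "\<lambda>i. (y$i)^2"] by simp

lemma F_differentiable: "F differentiable (at y)"
proof -
  have "(\<lambda>y. (y$k)^4 + 2 * ((\<Sum>i\<in>P. (y$i)^2) - 3 * (\<Sum>i\<in>R. (y$i)^2)) * (y$k)^2 + 8 * \<psi> y * y$k + \<theta> y)
     differentiable (at y)"
    by (intro differentiable_add differentiable_mult differentiable_diff differentiable_sum
        differentiable_power differentiable_const coord_differentiable
        hom_poly_differentiable[OF hom_psi] hom_poly_differentiable[OF hom_theta])
      (auto intro!: differentiable_power coord_differentiable)
  then show ?thesis by (simp add: F_def[abs_def])
qed

lemma eikonal_F: "(\<Sum>j\<in>UNIV. (partial_deriv F y j)^2) = 16 * (norm y)^6"
proof -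
  define x where "x = transpose Q *v y"
  have yx: "Q *v x = y" unfolding x_def using orth by (rule orthogonal_matrix_mult_transpose)
  define w where "w = (\<chi> j. partial_deriv F y j)"
  have "grad f x $ i = (transpose Q *v w) $ i" for i
  proof -
    have "(\<lambda>s. f (x + s *\<^sub>R axis i 1)) = (\<lambda>s. F (y + s *\<^sub>R (Q *v axis i 1)))"
      by (rule ext) (simp add: f_eq_F yx matrix_vector_right_distrib matrix_vector_mult_scaleR)
    then have "grad f x $ i = (\<Sum>j\<in>UNIV. (Q *v axis i 1) $ j * partial_deriv F y j)"
      unfolding grad_nth partial_deriv_def[of f x i]
      by (metis DERIV_imp_deriv has_real_derivative_directional[OF F_differentiable])
    also have "\<dots> = (\<Sum>j\<in>UNIV. Q $ j $ i * w $ j)"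
      by (simp add: w_def matrix_vector_mult_def axis_def if_distrib cong: if_cong)
    also have "\<dots> = (transpose Q *v w) $ i"
      by (simp add: matrix_vector_mult_def transpose_def)
    finally show ?thesis .
  qed
  then have "grad f x = transpose Q *v w" by (simp add: vec_eq_iff)
  then have "norm (grad f x) = norm w"
    using norm_orthogonal_matrix_mult[of "transpose Q"] orth by simp
  moreover have "norm x = norm y" using norm_orthogonal_matrix_mult[OF orth, of x] yx by simp
  ultimately have "(norm w)^2 = 16 * (norm y)^6" using eikonal by metis
  then show ?thesis by (simp add: norm_sq_eq_sum w_def)
qed

lemma partial_deriv_F:
  "partial_deriv F y j = 4 * (y$k)^3 * (if j = k then 1 else 0)
     + 2 * ((if j \<in> P then 2 * y $ j else 0) - 3 * (if j \<in> R then 2 * y $ j else 0)) * (y$k)^2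
     + 2 * ((\<Sum>i\<in>P. (y$i)^2) - 3 * (\<Sum>i\<in>R. (y$i)^2)) * (2 * y$k * (if j = k then 1 else 0))
     + 8 * (partial_deriv \<psi> y j * y$k + \<psi> y * (if j = k then 1 else 0)) + partial_deriv \<theta> y j"
proof (rule partial_deriv_eqI)
  have "(\<lambda>s. (y + s *\<^sub>R axis j 1) $ k) = (\<lambda>s. y $ k + s * (if j = k then 1 else 0))"
    by (rule ext) (auto simp: axis_def)
  then have dk: "((\<lambda>s. (y + s *\<^sub>R axis j 1) $ k) has_real_derivative (if j = k then 1 else 0)) (at 0)"
    by (auto intro!: derivative_eq_intros)
  note dP = has_real_derivative_sum_squares[of P y j] and dR = has_real_derivative_sum_squares[of R y j]
  note dpsi = has_real_derivative_partial_deriv[OF hom_poly_differentiable[OF hom_psi], of y j]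
  note dth = has_real_derivative_partial_deriv[OF hom_poly_differentiable[OF hom_theta], of y j]
  show "((\<lambda>s. F (y + s *\<^sub>R axis j 1)) has_real_derivative
     (4 * (y$k)^3 * (if j = k then 1 else 0)
     + 2 * ((if j \<in> P then 2 * y $ j else 0) - 3 * (if j \<in> R then 2 * y $ j else 0)) * (y$k)^2
     + 2 * ((\<Sum>i\<in>P. (y$i)^2) - 3 * (\<Sum>i\<in>R. (y$i)^2)) * (2 * y$k * (if j = k then 1 else 0))
     + 8 * (partial_deriv \<psi> y j * y$k + \<psi> y * (if j = k then 1 else 0)) + partial_deriv \<theta> y j)) (at 0)"
    unfolding F_def
    by (rule dk dP dR dpsi dth derivative_eq_intros | simp)+
qed

lemma partial_deriv_F_k:
  "partial_deriv F y k = 4 * (y$k)^3 + 4 * ((\<Sum>i\<in>P. (y$i)^2) - 3 * (\<Sum>i\<in>R. (y$i)^2)) * y$k + 8 * \<psi> y"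
  using partial_deriv_F[of y k] kP kR partial_deriv_hom_poly_outside[OF hom_psi k_notin_PR]
    partial_deriv_hom_poly_outside[OF hom_theta k_notin_PR]
  by (simp add: algebra_simps)

lemma partial_deriv_F_P:
  assumes "j \<in> P"
  shows "partial_deriv F y j = (4 * y$j) * (y$k)^2 + (8 * partial_deriv \<psi> y j) * y$k + partial_deriv \<theta> y j"
proof -
  have "j \<noteq> k" "j \<notin> R" using assms kP disj by auto
  then show ?thesis using partial_deriv_F[of y j] assms by (simp add: algebra_simps)
qed

lemma partial_deriv_F_R:
  assumes "j \<in> R"
  shows "partial_deriv F y j = (-12 * y$j) * (y$k)^2 + (8 * partial_deriv \<psi> y j) * y$k + partial_deriv \<theta> y j"
proof -
  have "j \<noteq> k" "j \<notin> P" using assms kR disj by auto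
  then show ?thesis using partial_deriv_F[of y j] assms by (simp add: algebra_simps)
qed

lemma eikonal_on_k_line:
  assumes zk: "z $ k = 0"
  defines "SP \<equiv> (\<Sum>i\<in>P. (z$i)^2)" and "SR \<equiv> (\<Sum>i\<in>R. (z$i)^2)"
  shows "(4 * t^3 + 4 * (SP - 3 * SR) * t + 8 * \<psi> z)^2
    + (\<Sum>j\<in>P. ((4 * z$j) * t^2 + (8 * partial_deriv \<psi> z j) * t + partial_deriv \<theta> z j)^2)
    + (\<Sum>j\<in>R. ((-12 * z$j) * t^2 + (8 * partial_deriv \<psi> z j) * t + partial_deriv \<theta> z j)^2)
    = 16 * (t^2 + (SP + SR))^3"
proof -
  define y where "y = z + t *\<^sub>R axis k 1"
  have yk: "y $ k = t" using zk by (simp add: y_def)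
  have yi: "i \<noteq> k \<Longrightarrow> y $ i = z $ i" for i by (simp add: y_def axis_def)
  have vars: "\<forall>i\<in>P \<union> R. y $ i = z $ i" using yi k_notin_PR by metis
  have sP: "(\<Sum>i\<in>P. (y$i)^2) = SP" and sR: "(\<Sum>i\<in>R. (y$i)^2) = SR"
    unfolding SP_def SR_def using vars by (auto intro: sum.cong)
  have psi: "\<psi> y = \<psi> z" using hom_poly_vars_cong[OF hom_psi vars] .
  have dpsi: "partial_deriv \<psi> y j = partial_deriv \<psi> z j" for j
    using partial_deriv_hom_poly_vars_cong[OF hom_psi vars] .
  have dth: "partial_deriv \<theta> y j = partial_deriv \<theta> z j" for j
    using partial_deriv_hom_poly_vars_cong[OF hom_theta vars] .
  have "(\<Sum>j\<in>P. (partial_deriv F y j)^2)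
      = (\<Sum>j\<in>P. ((4 * z$j) * t^2 + (8 * partial_deriv \<psi> z j) * t + partial_deriv \<theta> z j)^2)"
    using kP by (intro sum.cong refl) (metis partial_deriv_F_P yk yi dpsi dth)
  moreover have "(\<Sum>j\<in>R. (partial_deriv F y j)^2)
      = (\<Sum>j\<in>R. ((-12 * z$j) * t^2 + (8 * partial_deriv \<psi> z j) * t + partial_deriv \<theta> z j)^2)"
    using kR by (intro sum.cong refl) (metis partial_deriv_F_R yk yi dpsi dth)
  moreover have "(norm y)^6 = ((norm y)^2)^3" by (simp add: power_mult[symmetric])
  then have "(norm y)^6 = (t^2 + (SP + SR))^3"
    using norm_sq_split[of y] yk sP sR by (simp add: add.assoc)
  ultimately show ?thesis
    using eikonal_F[of y] sum_UNIV_split[of "\<lambda>j. (partial_deriv F y j)^2"]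
      partial_deriv_F_k[of y] yk sP sR psi by simp
qed

text \<open>The coefficients of t^3, t^2, t and 1 in the identity above.\<close>

lemma eikonal_coeffs:
  assumes zk: "z $ k = 0"
  defines "SP \<equiv> (\<Sum>i\<in>P. (z$i)^2)" and "SR \<equiv> (\<Sum>i\<in>R. (z$i)^2)"
  shows "64 * \<psi> z + 64 * (\<Sum>j\<in>P. z$j * partial_deriv \<psi> z j) - 192 * (\<Sum>j\<in>R. z$j * partial_deriv \<psi> z j) = 0"
    and "16 * (SP - 3 * SR)^2 + 64 * (\<Sum>j\<in>P. (partial_deriv \<psi> z j)^2) + 64 * (\<Sum>j\<in>R. (partial_deriv \<psi> z j)^2)
         + 8 * (\<Sum>j\<in>P. z$j * partial_deriv \<theta> z j) - 24 * (\<Sum>j\<in>R. z$j * partial_deriv \<theta> z j) = 48 * (SP + SR)^2"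
    and "64 * (SP - 3 * SR) * \<psi> z + 16 * (\<Sum>j\<in>P. partial_deriv \<psi> z j * partial_deriv \<theta> z j)
         + 16 * (\<Sum>j\<in>R. partial_deriv \<psi> z j * partial_deriv \<theta> z j) = 0"
    and "64 * (\<psi> z)^2 + (\<Sum>j\<in>P. (partial_deriv \<theta> z j)^2) + (\<Sum>j\<in>R. (partial_deriv \<theta> z j)^2)
         = 16 * (SP + SR)^3"
proof -
  define a where "a = (\<lambda>j. 4 * z$j)"
  define a' where "a' = (\<lambda>j. -12 * z$j)"
  define b where "b = (\<lambda>j. 8 * partial_deriv \<psi> z j)"
  define c where "c = (\<lambda>j. partial_deriv \<theta> z j)"
  define A where "A = SP - 3 * SR"
  define N where "N = SP + SR"
  define p where "p = \<psi> z"
  have "(4 * t^3 + 4 * A * t + 8 * p)^2 + (\<Sum>j\<in>P. (a j * t^2 + b j * t + c j)^2)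
      + (\<Sum>j\<in>R. (a' j * t^2 + b j * t + c j)^2) = 16 * (t^2 + N)^3" for t
    using eikonal_on_k_line[OF zk, of t]
    unfolding a_def a'_def b_def c_def A_def N_def p_def SP_def SR_def by simp
  note C0 = sextic_sum_sq_coeffs(4)[OF this] and C1 = sextic_sum_sq_coeffs(3)[OF this]
    and C2 = sextic_sum_sq_coeffs(2)[OF this] and C3 = sextic_sum_sq_coeffs(1)[OF this]
  show "64 * \<psi> z + 64 * (\<Sum>j\<in>P. z$j * partial_deriv \<psi> z j) - 192 * (\<Sum>j\<in>R. z$j * partial_deriv \<psi> z j) = 0"
  proof -
    have "(\<Sum>j\<in>P. a j * b j) = 32 * (\<Sum>j\<in>P. z$j * partial_deriv \<psi> z j)"
      "(\<Sum>j\<in>R. a' j * b j) = -96 * (\<Sum>j\<in>R. z$j * partial_deriv \<psi> z j)"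
      unfolding a_def a'_def b_def by (simp_all add: sum_distrib_left mult_ac)
    then show ?thesis using C3 unfolding p_def by simp
  qed
  show "16 * (SP - 3 * SR)^2 + 64 * (\<Sum>j\<in>P. (partial_deriv \<psi> z j)^2) + 64 * (\<Sum>j\<in>R. (partial_deriv \<psi> z j)^2)
         + 8 * (\<Sum>j\<in>P. z$j * partial_deriv \<theta> z j) - 24 * (\<Sum>j\<in>R. z$j * partial_deriv \<theta> z j) = 48 * (SP + SR)^2"
  proof -
    have "(\<Sum>j\<in>P. (b j)^2) = 64 * (\<Sum>j\<in>P. (partial_deriv \<psi> z j)^2)"
      "(\<Sum>j\<in>R. (b j)^2) = 64 * (\<Sum>j\<in>R. (partial_deriv \<psi> z j)^2)"
      "(\<Sum>j\<in>P. a j * c j) = 4 * (\<Sum>j\<in>P. z$j * partial_deriv \<theta> z j)"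
      "(\<Sum>j\<in>R. a' j * c j) = -12 * (\<Sum>j\<in>R. z$j * partial_deriv \<theta> z j)"
      unfolding a_def a'_def b_def c_def by (simp_all add: sum_distrib_left power_mult_distrib mult_ac)
    then show ?thesis using C2 unfolding A_def N_def by simp
  qed
  show "64 * (SP - 3 * SR) * \<psi> z + 16 * (\<Sum>j\<in>P. partial_deriv \<psi> z j * partial_deriv \<theta> z j)
         + 16 * (\<Sum>j\<in>R. partial_deriv \<psi> z j * partial_deriv \<theta> z j) = 0"
    using C1 unfolding b_def c_def A_def p_def by (simp add: sum_distrib_left mult_ac)
  show "64 * (\<psi> z)^2 + (\<Sum>j\<in>P. (partial_deriv \<theta> z j)^2) + (\<Sum>j\<in>R. (partial_deriv \<theta> z j)^2)
         = 16 * (SP + SR)^3"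
    using C0 unfolding c_def p_def N_def by simp
qed

lemma euler_psi:
  "(\<Sum>j\<in>P. z$j * partial_deriv \<psi> z j) + (\<Sum>j\<in>R. z$j * partial_deriv \<psi> z j) = 3 * \<psi> z"
  using hom_poly_euler[OF hom_psi, of z] disj by (simp add: sum.union_disjoint)

lemma euler_theta:
  "(\<Sum>j\<in>P. z$j * partial_deriv \<theta> z j) + (\<Sum>j\<in>R. z$j * partial_deriv \<theta> z j) = 4 * \<theta> z"
  using hom_poly_euler[OF hom_theta, of z] disj by (simp add: sum.union_disjoint)

definition drop_k :: "real^'n \<Rightarrow> real^'n" where "drop_k y = (\<chi> i. if i = k then 0 else y $ i)"

lemma drop_k_k: "drop_k y $ k = 0" by (simp add: drop_k_def)

lemma drop_k_vars: "\<forall>i\<in>P \<union> R. drop_k y $ i = y $ i" using k_notin_PR by (auto simp: drop_k_def)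

lemma psi_drop_k: "\<psi> (drop_k y) = \<psi> y"
  using hom_poly_vars_cong[OF hom_psi drop_k_vars] .

lemma theta_drop_k: "\<theta> (drop_k y) = \<theta> y"
  using hom_poly_vars_cong[OF hom_theta drop_k_vars] .

text \<open>With no \<eta>-part, resp. no \<xi>-part, the coefficient of t^3 and Euler's relation give
  \<psi> = 0, and then the coefficient of t^2 determines \<theta>.\<close>

lemma primitive_if_R_empty:
  assumes R0: "R = {}"
  shows "primitive f"
proof -
  have psi0: "\<psi> y = 0" for y
    using eikonal_coeffs(1)[OF drop_k_k, of y] euler_psi[of "drop_k y"] R0 psi_drop_k by simp
  have theta: "\<theta> y = (\<Sum>i\<in>P. (y$i)^2)^2" for y
  proof -
    have "(\<Sum>i\<in>P. (drop_k y $ i)^2) = (\<Sum>i\<in>P. (y$i)^2)" using drop_k_vars by (auto intro: sum.cong)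
    then show ?thesis
      using eikonal_coeffs(2)[OF drop_k_k, of y] euler_theta[of "drop_k y"] R0 theta_drop_k
        partial_deriv_zero_fun[of \<psi>, OF psi0] by simp
  qed
  have "f x = (norm x)^4" for x
  proof -
    define y where "y = Q *v x"
    have "f x = ((y$k)^2 + (\<Sum>i\<in>P. (y$i)^2))^2"
      unfolding f_eq_F y_def[symmetric] F_def using R0 psi0 theta
      by (simp add: power2_eq_square power4_eq_xxxx algebra_simps)
    also have "\<dots> = ((norm y)^2)^2"
      using norm_sq_split[of y] R0 by simp
    also have "\<dots> = (norm y)^4" by (simp add: power_mult[symmetric])
    finally show ?thesis using norm_orthogonal_matrix_mult[OF orth] by (simp add: y_def)
  qed
  then show ?thesis unfolding primitive_def
    by (intro exI[of _ UNIV] exI[of _ "mat 1"] exI[of _ 1]) (simp add: h4_UNIV subspace_UNIV orthogonal_matrix_id)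
qed

lemma primitive_if_P_empty:
  assumes P0: "P = {}"
  shows "primitive f"
proof -
  have psi0: "\<psi> y = 0" for y
    using eikonal_coeffs(1)[OF drop_k_k, of y] euler_psi[of "drop_k y"] P0 psi_drop_k by simp
  have theta: "\<theta> y = (\<Sum>i\<in>R. (y$i)^2)^2" for y
  proof -
    have "(\<Sum>i\<in>R. (drop_k y $ i)^2) = (\<Sum>i\<in>R. (y$i)^2)" using drop_k_vars by (auto intro: sum.cong)
    then show ?thesis
      using eikonal_coeffs(2)[OF drop_k_k, of y] euler_theta[of "drop_k y"] P0 theta_drop_k
        partial_deriv_zero_fun[of \<psi>, OF psi0] by (simp add: power2_eq_square algebra_simps)
  qed
  define H where "H = {v::real^'n. \<forall>i. i \<noteq> k \<longrightarrow> v $ i = 0}"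
  have "f x = h4 H (Q *v x)" for x
  proof -
    define y where "y = Q *v x"
    define p where "p = (\<chi> i. if i = k then y $ i else 0)"
    have "proj_onto H y = p"
      by (rule proj_onto_eqI) (auto simp: H_def p_def inner_vec_def intro!: sum.neutral)
    moreover have "(\<Sum>i\<in>R. (p $ i)^2) = 0" using kR by (intro sum.neutral) (auto simp: p_def)
    then have "(norm p)^2 = (y$k)^2" using norm_sq_split[of p] P0 by (simp add: p_def)
    moreover have "(\<Sum>i\<in>R. ((y - p) $ i)^2) = (\<Sum>i\<in>R. (y $ i)^2)"
      using kR by (intro sum.cong) (auto simp: p_def)
    then have "(norm (y - p))^2 = (\<Sum>i\<in>R. (y$i)^2)" using norm_sq_split[of "y - p"] P0 by (simp add: p_def)
    ultimately show ?thesis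
      unfolding f_eq_F y_def[symmetric] F_def h4_eq_proj using P0 psi0 theta
      by (simp add: h4_eq_proj power2_eq_square power4_eq_xxxx algebra_simps)
  qed
  moreover have "subspace H" unfolding subspace_def H_def by auto
  ultimately show ?thesis unfolding primitive_def using orth
    by (intro exI[of _ H] exI[of _ Q] exI[of _ 1]) simp
qed

end

section \<open>One-dimensional \<eta>-part: the structure of \<psi>\<close>

locale eikonal_E_form_eta1 = eikonal_E_form +
  fixes m
  assumes R_eq: "R = {m}"
begin

lemma m_notin_P: "m \<notin> P" using R_eq disj by auto

lemma m_neq_k: "m \<noteq> k" using R_eq kR by auto

lemma sum_R: "(\<Sum>i\<in>R. g i) = g m" using R_eq by simp

lemma vars_shift_m: "\<forall>i\<in>P. (y + s *\<^sub>R axis m 1) $ i = y $ i"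
  using m_notin_P by (auto simp: axis_def)

definition xi_eta where
  "xi_eta y s = (\<chi> i. if i \<in> P then y $ i else if i = m then s else 0)"

lemma xi_eta_P: "i \<in> P \<Longrightarrow> xi_eta y s $ i = y $ i" by (simp add: xi_eta_def)

lemma xi_eta_m: "xi_eta y s $ m = s" using m_notin_P by (simp add: xi_eta_def)

lemma xi_eta_k: "xi_eta y s $ k = 0" using kP m_neq_k by (simp add: xi_eta_def)

lemma xi_eta_vars: "\<forall>i\<in>P. xi_eta y s $ i = y $ i" using xi_eta_P by auto

lemma hom_poly_P_expand_eta:
  assumes "hom_poly d (P \<union> R) g"
  obtains C where "\<And>j. j \<le> d \<Longrightarrow> hom_poly (d - j) P (C j)" "\<And>y. g y = (\<Sum>j\<le>d. (y $ m) ^ j * C j y)"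
proof -
  have "P \<union> R - {m} = P" "m \<in> P \<union> R" using R_eq m_notin_P by auto
  then show ?thesis using hom_poly_expand_var[OF assms] that by metis
qed

lemma psi_eq_eta_partial: "\<psi> y = y$m * partial_deriv \<psi> y m"
proof -
  define z where "z = drop_k y"
  have "64 * \<psi> z + 64 * (\<Sum>j\<in>P. z$j * partial_deriv \<psi> z j) - 192 * (z$m * partial_deriv \<psi> z m) = 0"
    using eikonal_coeffs(1)[OF drop_k_k, of y] unfolding z_def sum_R .
  moreover have "(\<Sum>j\<in>P. z$j * partial_deriv \<psi> z j) + z$m * partial_deriv \<psi> z m = 3 * \<psi> z"
    using euler_psi[of z] unfolding sum_R .
  moreover have "\<psi> z = \<psi> y" unfolding z_def by (rule psi_drop_k)
  moreover have "partial_deriv \<psi> z m = partial_deriv \<psi> y m"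
    unfolding z_def using partial_deriv_hom_poly_vars_cong[OF hom_psi drop_k_vars] .
  moreover have "z $ m = y $ m" unfolding z_def drop_k_def using m_neq_k by simp
  ultimately show ?thesis by simp
qed

text \<open>Expanding \<psi> = \<Psi>_0 + \<eta> \<Psi>_1 + \<eta>^2 \<Psi>_2 + \<eta>^3 \<Psi>_3, the identity \<psi> = \<eta> \<partial>\<psi>/\<partial>\<eta>
  kills every term except \<eta> \<Psi>_1.\<close>

lemma psi_eq_eta_times_quadratic:
  obtains q where "hom_poly 2 P q" "\<And>y. \<psi> y = y$m * q y"
proof -
  obtain \<Psi> where hom: "\<And>j. j \<le> 3 \<Longrightarrow> hom_poly (3 - j) P (\<Psi> j)"
    and psi: "\<And>y. \<psi> y = (\<Sum>j\<le>3. (y $ m) ^ j * \<Psi> j y)"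
    using hom_poly_P_expand_eta[OF hom_psi] by blast
  have psi_expand: "\<psi> y = \<Psi> 0 y + y$m * \<Psi> 1 y + (y$m)^2 * \<Psi> 2 y + (y$m)^3 * \<Psi> 3 y" for y
    unfolding psi by (simp add: numeral_eq_Suc atMost_Suc)
  have pdm: "partial_deriv \<psi> y m = \<Psi> 1 y + 2 * y$m * \<Psi> 2 y + 3 * (y$m)^2 * \<Psi> 3 y" for y
  proof (rule partial_deriv_eqI)
    have "\<Psi> j (y + s *\<^sub>R axis m 1) = \<Psi> j y" if "j \<le> 3" for j s
      using hom_poly_vars_cong[OF hom[OF that] vars_shift_m] .
    then have "(\<lambda>s. \<psi> (y + s *\<^sub>R axis m 1)) =
      (\<lambda>s. \<Psi> 0 y + (y$m + s) * \<Psi> 1 y + (y$m + s)^2 * \<Psi> 2 y + (y$m + s)^3 * \<Psi> 3 y)"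
      by (simp add: psi_expand)
    moreover have "((\<lambda>s. \<Psi> 0 y + (y$m + s) * \<Psi> 1 y + (y$m + s)^2 * \<Psi> 2 y + (y$m + s)^3 * \<Psi> 3 y)
       has_real_derivative (\<Psi> 1 y + 2 * y$m * \<Psi> 2 y + 3 * (y$m)^2 * \<Psi> 3 y)) (at 0)"
      by (auto intro!: derivative_eq_intros simp: power2_eq_square)
    ultimately show "((\<lambda>s. \<psi> (y + s *\<^sub>R axis m 1)) has_real_derivative
        (\<Psi> 1 y + 2 * y$m * \<Psi> 2 y + 3 * (y$m)^2 * \<Psi> 3 y)) (at 0)" by simp
  qed
  have "\<Psi> 0 y = 0 \<and> \<Psi> 2 y = 0 \<and> \<Psi> 3 y = 0" for y
  proof -
    have cs: "\<Psi> j (xi_eta y s) = \<Psi> j y" if "j \<le> 3" for j s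
      using hom_poly_vars_cong[OF hom[OF that] xi_eta_vars] .
    have "\<Psi> 0 y + 0 * s + (- \<Psi> 2 y) * s^2 + (- 2 * \<Psi> 3 y) * s^3 + 0 * s^4 + 0 * s^5 + 0 * s^6 = 0" for s
      using psi_eq_eta_partial[of "xi_eta y s"] unfolding psi_expand pdm xi_eta_m
      by (simp add: cs power2_eq_square power3_eq_cube algebra_simps)
    from real_poly6_coeffs_eq_0[OF this] show ?thesis by simp
  qed
  then show ?thesis
    using that[of "\<Psi> 1"] hom[of 1] psi_expand by simp
qed

end

locale eikonal_E_form_eta1_expansion = eikonal_E_form_eta1 +
  fixes q and \<Theta> :: "nat \<Rightarrow> _"
  assumes hom_q: "hom_poly 2 P q" and psi_q: "\<And>y. \<psi> y = y$m * q y"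
    and hom_Theta: "\<And>j. j \<le> 4 \<Longrightarrow> hom_poly (4 - j) P (\<Theta> j)"
    and theta_expand: "\<And>y. \<theta> y = \<Theta> 0 y + y$m * \<Theta> 1 y + (y$m)^2 * \<Theta> 2 y + (y$m)^3 * \<Theta> 3 y
                                  + (y$m)^4 * \<Theta> 4 y"
begin

definition xi_sq where "xi_sq y = (\<Sum>i\<in>P. (y$i)^2)"

definition grad_q_sq where "grad_q_sq y = (\<Sum>j\<in>P. (partial_deriv q y j)^2)"

lemma Theta_shift_m: "j \<le> 4 \<Longrightarrow> \<Theta> j (y + s *\<^sub>R axis m 1) = \<Theta> j y"
  using hom_poly_vars_cong[OF hom_Theta vars_shift_m] .

lemma q_shift_m: "q (y + s *\<^sub>R axis m 1) = q y"
  using hom_poly_vars_cong[OF hom_q vars_shift_m] .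

lemma partial_deriv_psi_P:
  assumes j: "j \<in> P"
  shows "partial_deriv \<psi> y j = y$m * partial_deriv q y j"
proof (rule partial_deriv_eqI)
  have "j \<noteq> m" using j m_notin_P by auto
  then have "(\<lambda>s. \<psi> (y + s *\<^sub>R axis j 1)) = (\<lambda>s. y$m * q (y + s *\<^sub>R axis j 1))"
    by (simp add: psi_q axis_def)
  moreover have "((\<lambda>s. y$m * q (y + s *\<^sub>R axis j 1)) has_real_derivative y$m * partial_deriv q y j) (at 0)"
    by (intro DERIV_cmult has_real_derivative_partial_deriv hom_poly_differentiable[OF hom_q])
  ultimately show "((\<lambda>s. \<psi> (y + s *\<^sub>R axis j 1)) has_real_derivative y$m * partial_deriv q y j) (at 0)"
    by simp
qed

lemma partial_deriv_psi_m: "partial_deriv \<psi> y m = q y"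
proof (rule partial_deriv_eqI)
  have "(\<lambda>s. \<psi> (y + s *\<^sub>R axis m 1)) = (\<lambda>s. (y$m + s) * q y)"
    by (simp add: psi_q q_shift_m)
  moreover have "((\<lambda>s. (y$m + s) * q y) has_real_derivative q y) (at 0)"
    by (auto intro!: derivative_eq_intros)
  ultimately show "((\<lambda>s. \<psi> (y + s *\<^sub>R axis m 1)) has_real_derivative q y) (at 0)" by simp
qed

lemma partial_deriv_theta_P:
  assumes j: "j \<in> P"
  shows "partial_deriv \<theta> y j = partial_deriv (\<Theta> 0) y j + y$m * partial_deriv (\<Theta> 1) y j
     + (y$m)^2 * partial_deriv (\<Theta> 2) y j + (y$m)^3 * partial_deriv (\<Theta> 3) y j
     + (y$m)^4 * partial_deriv (\<Theta> 4) y j"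
proof (rule partial_deriv_eqI)
  let ?T = "\<lambda>l s. \<Theta> l (y + s *\<^sub>R axis j 1)"
  have "j \<noteq> m" using j m_notin_P by auto
  then have "(\<lambda>s. \<theta> (y + s *\<^sub>R axis j 1)) = (\<lambda>s. ?T 0 s + y$m * ?T 1 s
     + (y$m)^2 * ?T 2 s + (y$m)^3 * ?T 3 s + (y$m)^4 * ?T 4 s)"
    by (simp add: theta_expand axis_def)
  moreover have "\<And>l. l \<le> 4 \<Longrightarrow> (?T l has_real_derivative partial_deriv (\<Theta> l) y j) (at 0)"
    by (intro has_real_derivative_partial_deriv hom_poly_differentiable[OF hom_Theta])
  then have "((\<lambda>s. ?T 0 s + y$m * ?T 1 s + (y$m)^2 * ?T 2 s + (y$m)^3 * ?T 3 s + (y$m)^4 * ?T 4 s)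
     has_real_derivative (partial_deriv (\<Theta> 0) y j + y$m * partial_deriv (\<Theta> 1) y j
       + (y$m)^2 * partial_deriv (\<Theta> 2) y j + (y$m)^3 * partial_deriv (\<Theta> 3) y j
       + (y$m)^4 * partial_deriv (\<Theta> 4) y j)) (at 0)"
    by (intro DERIV_add DERIV_cmult) auto
  ultimately show "((\<lambda>s. \<theta> (y + s *\<^sub>R axis j 1)) has_real_derivative
     (partial_deriv (\<Theta> 0) y j + y$m * partial_deriv (\<Theta> 1) y j
       + (y$m)^2 * partial_deriv (\<Theta> 2) y j + (y$m)^3 * partial_deriv (\<Theta> 3) y j
       + (y$m)^4 * partial_deriv (\<Theta> 4) y j)) (at 0)" by simp
qed

lemma partial_deriv_theta_m:
  "partial_deriv \<theta> y m = \<Theta> 1 y + 2 * y$m * \<Theta> 2 y + 3 * (y$m)^2 * \<Theta> 3 y + 4 * (y$m)^3 * \<Theta> 4 y"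
proof (rule partial_deriv_eqI)
  have "(\<lambda>s. \<theta> (y + s *\<^sub>R axis m 1)) = (\<lambda>s. \<Theta> 0 y + (y$m + s) * \<Theta> 1 y + (y$m + s)^2 * \<Theta> 2 y
      + (y$m + s)^3 * \<Theta> 3 y + (y$m + s)^4 * \<Theta> 4 y)"
    by (simp add: theta_expand Theta_shift_m)
  moreover have "((\<lambda>s. \<Theta> 0 y + (y$m + s) * \<Theta> 1 y + (y$m + s)^2 * \<Theta> 2 y
      + (y$m + s)^3 * \<Theta> 3 y + (y$m + s)^4 * \<Theta> 4 y) has_real_derivative
      (\<Theta> 1 y + 2 * y$m * \<Theta> 2 y + 3 * (y$m)^2 * \<Theta> 3 y + 4 * (y$m)^3 * \<Theta> 4 y)) (at 0)"
    by (auto intro!: derivative_eq_intros simp: power2_eq_square power3_eq_cube)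
  ultimately show "((\<lambda>s. \<theta> (y + s *\<^sub>R axis m 1)) has_real_derivative
      (\<Theta> 1 y + 2 * y$m * \<Theta> 2 y + 3 * (y$m)^2 * \<Theta> 3 y + 4 * (y$m)^3 * \<Theta> 4 y)) (at 0)" by simp
qed

lemma euler_Theta: "l \<le> 4 \<Longrightarrow> (\<Sum>j\<in>P. y$j * partial_deriv (\<Theta> l) y j) = (4 - real l) * \<Theta> l y"
  using hom_poly_euler[OF hom_Theta, of l y] by (simp add: of_nat_diff)

lemma euler_q: "(\<Sum>j\<in>P. y$j * partial_deriv q y j) = 2 * q y"
  using hom_poly_euler[OF hom_q, of y] by simp

lemma xi_sq_xi_eta: "(\<Sum>i\<in>P. (xi_eta y s $ i)^2) = xi_sq y"
  unfolding xi_sq_def by (intro sum.cong) (simp_all add: xi_eta_P)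

lemma q_xi_eta: "q (xi_eta y s) = q y"
  using hom_poly_vars_cong[OF hom_q xi_eta_vars] .

lemma partial_deriv_q_xi_eta: "partial_deriv q (xi_eta y s) j = partial_deriv q y j"
  using partial_deriv_hom_poly_vars_cong[OF hom_q xi_eta_vars] .

lemma Theta_xi_eta: "l \<le> 4 \<Longrightarrow> \<Theta> l (xi_eta y s) = \<Theta> l y"
  using hom_poly_vars_cong[OF hom_Theta xi_eta_vars] .

lemma eikonal_coeff2_xi_eta:
  "16 * (xi_sq y - 3 * s^2)^2 + 64 * s^2 * grad_q_sq y + 64 * (q y)^2
   + 8 * (4 * \<Theta> 0 y + 3 * s * \<Theta> 1 y + 2 * s^2 * \<Theta> 2 y + s^3 * \<Theta> 3 y)
   - 24 * s * (\<Theta> 1 y + 2 * s * \<Theta> 2 y + 3 * s^2 * \<Theta> 3 y + 4 * s^3 * \<Theta> 4 y) = 48 * (xi_sq y + s^2)^2"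
proof -
  define z where "z = xi_eta y s"
  have zm: "z $ m = s" unfolding z_def by (rule xi_eta_m)
  have "(\<Sum>j\<in>P. (partial_deriv \<psi> z j)^2) = (\<Sum>j\<in>P. s^2 * (partial_deriv q y j)^2)"
    by (intro sum.cong refl) (simp add: partial_deriv_psi_P z_def xi_eta_m partial_deriv_q_xi_eta power_mult_distrib)
  then have a3: "(\<Sum>j\<in>P. (partial_deriv \<psi> z j)^2) = s^2 * grad_q_sq y"
    by (simp add: grad_q_sq_def sum_distrib_left)
  have "(\<Sum>j\<in>P. z$j * partial_deriv \<theta> z j)
     = (\<Sum>j\<in>P. z$j * partial_deriv (\<Theta> 0) z j) + s * (\<Sum>j\<in>P. z$j * partial_deriv (\<Theta> 1) z j)
       + s^2 * (\<Sum>j\<in>P. z$j * partial_deriv (\<Theta> 2) z j) + s^3 * (\<Sum>j\<in>P. z$j * partial_deriv (\<Theta> 3) z j)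
       + s^4 * (\<Sum>j\<in>P. z$j * partial_deriv (\<Theta> 4) z j)"
    by (simp add: partial_deriv_theta_P zm sum.distrib sum_distrib_left algebra_simps)
  also have "\<dots> = 4 * \<Theta> 0 z + s * (3 * \<Theta> 1 z) + s^2 * (2 * \<Theta> 2 z) + s^3 * \<Theta> 3 z"
    using euler_Theta[of 0 z] euler_Theta[of 1 z] euler_Theta[of 2 z] euler_Theta[of 3 z]
      euler_Theta[of 4 z] by simp
  finally have a5: "(\<Sum>j\<in>P. z$j * partial_deriv \<theta> z j)
      = 4 * \<Theta> 0 y + 3 * s * \<Theta> 1 y + 2 * s^2 * \<Theta> 2 y + s^3 * \<Theta> 3 y"
    unfolding z_def by (simp add: Theta_xi_eta)
  have a6: "(\<Sum>j\<in>R. z$j * partial_deriv \<theta> z j)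
      = s * (\<Theta> 1 y + 2 * s * \<Theta> 2 y + 3 * s^2 * \<Theta> 3 y + 4 * s^3 * \<Theta> 4 y)"
    by (simp add: sum_R partial_deriv_theta_m zm) (simp add: z_def Theta_xi_eta)
  have a1: "(\<Sum>i\<in>P. (z$i)^2) = xi_sq y" unfolding z_def by (rule xi_sq_xi_eta)
  have a2: "(\<Sum>i\<in>R. (z$i)^2) = s^2" using zm by (simp add: sum_R)
  have a4: "(\<Sum>j\<in>R. (partial_deriv \<psi> z j)^2) = (q y)^2"
    by (simp add: sum_R partial_deriv_psi_m z_def q_xi_eta)
  show ?thesis
    using eikonal_coeffs(2)[OF xi_eta_k, of y s] unfolding z_def[symmetric] a1 a2 a3 a4 a5 a6
    by (simp add: mult.assoc)
qed

lemma Theta_coeffs: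
  "\<Theta> 0 y = (xi_sq y)^2 - 2 * (q y)^2" "\<Theta> 2 y = 2 * grad_q_sq y - 6 * xi_sq y"
  "\<Theta> 3 y = 0" "\<Theta> 4 y = 1"
proof -
  have "(32 * \<Theta> 0 y + 64 * (q y)^2 - 32 * (xi_sq y)^2) + 0 * s
     + (64 * grad_q_sq y - 32 * \<Theta> 2 y - 192 * xi_sq y) * s^2
     + (- 64 * \<Theta> 3 y) * s^3 + (96 - 96 * \<Theta> 4 y) * s^4 + 0 * s^5 + 0 * s^6 = 0" for s
    using eikonal_coeff2_xi_eta[of y s] by algebra
  from real_poly6_coeffs_eq_0[OF this]
  show "\<Theta> 0 y = (xi_sq y)^2 - 2 * (q y)^2" "\<Theta> 2 y = 2 * grad_q_sq y - 6 * xi_sq y"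
    "\<Theta> 3 y = 0" "\<Theta> 4 y = 1"
    by auto
qed

lemma partial_deriv_Theta0:
  assumes j: "j \<in> P"
  shows "partial_deriv (\<Theta> 0) y j = 4 * xi_sq y * y$j - 4 * q y * partial_deriv q y j"
proof (rule partial_deriv_eqI)
  let ?S = "\<lambda>s. \<Sum>i\<in>P. ((y + s *\<^sub>R axis j 1) $ i)^2" and ?q = "\<lambda>s. q (y + s *\<^sub>R axis j 1)"
  have "(\<lambda>s. \<Theta> 0 (y + s *\<^sub>R axis j 1)) = (\<lambda>s. (?S s)^2 - 2 * (?q s)^2)"
    by (simp add: Theta_coeffs(1) xi_sq_def)
  moreover have dS: "(?S has_real_derivative 2 * y $ j) (at 0)"
    using has_real_derivative_sum_squares[of P y j] j by simp
  have dq: "(?q has_real_derivative partial_deriv q y j) (at 0)"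
    by (intro has_real_derivative_partial_deriv hom_poly_differentiable[OF hom_q])
  have "((\<lambda>s. (?S s)^2 - 2 * (?q s)^2) has_real_derivative
      (4 * xi_sq y * y$j - 4 * q y * partial_deriv q y j)) (at 0)"
    by (rule dS dq derivative_eq_intros | simp)+ (simp add: xi_sq_def)
  ultimately show "((\<lambda>s. \<Theta> 0 (y + s *\<^sub>R axis j 1)) has_real_derivative
      (4 * xi_sq y * y$j - 4 * q y * partial_deriv q y j)) (at 0)" by simp
qed

text \<open>On {y_k = 0, \<eta> = 0} the coefficients of t and 1 give q \<Theta>_1 = 0 and
  \<Theta>_1^2 = 16 q^2 (4 |\<xi>|^2 - |grad q|^2).\<close>

lemma Theta1_eq_0_and_q_constraint:
  "\<Theta> 1 y = 0" "(q y)^2 * (grad_q_sq y - 4 * xi_sq y) = 0"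
proof -
  define w where "w = xi_eta y 0"
  have wk: "w $ k = 0" and wm: "w $ m = 0" unfolding w_def by (rule xi_eta_k, rule xi_eta_m)
  have Theta_w: "\<And>l. l \<le> 4 \<Longrightarrow> \<Theta> l w = \<Theta> l y" unfolding w_def by (rule Theta_xi_eta)
  have dtheta_m: "partial_deriv \<theta> w m = \<Theta> 1 y" using wm Theta_w by (simp add: partial_deriv_theta_m)
  have dtheta_P: "\<And>j. j \<in> P \<Longrightarrow> partial_deriv \<theta> w j = partial_deriv (\<Theta> 0) y j"
    using wm partial_deriv_hom_poly_vars_cong[OF hom_Theta[of 0] xi_eta_vars, of y 0]
    by (simp add: partial_deriv_theta_P w_def)
  have c1: "q y * \<Theta> 1 y = 0"
    using eikonal_coeffs(3)[OF wk] wm dtheta_m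
    by (simp add: sum_R psi_q partial_deriv_psi_P partial_deriv_psi_m w_def q_xi_eta)
  have c0: "(\<Sum>j\<in>P. (partial_deriv (\<Theta> 0) y j)^2) + (\<Theta> 1 y)^2 = 16 * (xi_sq y)^3"
    using eikonal_coeffs(4)[OF wk] wm dtheta_P dtheta_m
    by (simp add: sum_R psi_q w_def xi_sq_xi_eta)
  have "(\<Sum>j\<in>P. (partial_deriv (\<Theta> 0) y j)^2)
      = (\<Sum>j\<in>P. (4 * xi_sq y)^2 * (y$j)^2 - 2 * (4 * xi_sq y) * (4 * q y) * (y$j * partial_deriv q y j)
          + (4 * q y)^2 * (partial_deriv q y j)^2)"
    by (intro sum.cong refl) (simp add: partial_deriv_Theta0 power2_eq_square algebra_simps)
  also have "\<dots> = (4 * xi_sq y)^2 * xi_sq y - 2 * (4 * xi_sq y) * (4 * q y) * (2 * q y)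
      + (4 * q y)^2 * grad_q_sq y"
    unfolding euler_q[symmetric]
    by (simp add: sum.distrib sum_subtractf sum_distrib_left[symmetric] xi_sq_def grad_q_sq_def)
  finally have "(\<Theta> 1 y)^2 = 16 * (q y)^2 * (4 * xi_sq y - grad_q_sq y)"
    using c0 by (simp add: power2_eq_square power3_eq_cube algebra_simps)
  then show "\<Theta> 1 y = 0" "(q y)^2 * (grad_q_sq y - 4 * xi_sq y) = 0"
    using c1 by (auto simp: power2_eq_square algebra_simps)
qed

lemma F_eq:
  "F y = (y$k)^4 + 2 * (xi_sq y - 3 * (y$m)^2) * (y$k)^2 + 8 * (y$m) * q y * y$k
   + (xi_sq y)^2 - 2 * (q y)^2 + (y$m)^2 * (2 * grad_q_sq y - 6 * xi_sq y) + (y$m)^4"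
  unfolding F_def theta_expand Theta_coeffs Theta1_eq_0_and_q_constraint(1)
  using psi_q[of y] by (simp add: sum_R xi_sq_def)

lemma norm_sq_xi_eta: "(norm v)^2 = (v$k)^2 + xi_sq v + (v$m)^2"
  using norm_sq_split[of v] by (simp add: sum_R xi_sq_def)

end

context eikonal_E_form_eta1_expansion
begin

lemma primitive_if_q_eq_0:
  assumes q0: "\<And>w. q w = 0"
  shows "primitive f"
proof -
  have G0: "grad_q_sq y = 0" for y
    unfolding grad_q_sq_def using partial_deriv_zero_fun[of q, OF q0] by simp
  define H :: "(real^_) set" where "H = {v. v $ m = 0}"
  have "f x = h4 H (Q *v x)" for x
  proof -
    define y where "y = Q *v x"
    define p where "p = (\<chi> i. if i = m then 0 else y $ i)"
    have "proj_onto H y = p"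
      by (rule proj_onto_eqI) (auto simp: H_def p_def inner_vec_def intro!: sum.neutral)
    moreover have "xi_sq p = xi_sq y" unfolding xi_sq_def p_def using m_notin_P by (intro sum.cong) auto
    then have "(norm p)^2 = (y$k)^2 + xi_sq y" using norm_sq_xi_eta[of p] m_neq_k by (simp add: p_def)
    moreover have "xi_sq (y - p) = 0" unfolding xi_sq_def p_def using m_notin_P by (intro sum.neutral) auto
    then have "(norm (y - p))^2 = (y$m)^2" using norm_sq_xi_eta[of "y - p"] m_neq_k by (simp add: p_def)
    ultimately show ?thesis
      unfolding f_eq_F y_def[symmetric] F_eq using q0 G0
      by (simp add: h4_eq_proj power2_eq_square power4_eq_xxxx algebra_simps)
  qed
  moreover have "subspace H" unfolding subspace_def H_def by auto
  ultimately show ?thesis unfolding primitive_def using orth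
    by (intro exI[of _ H] exI[of _ Q] exI[of _ 1]) simp
qed

lemma isometric_if_q_nonzero:
  assumes "sym_quadratic_form P M q" and w: "q w \<noteq> 0"
  shows "sym_quadratic_form_isometric P M q"
proof -
  interpret sym_quadratic_form P M q by fact
  have "grad_q_sq y = 4 * (\<Sum>j\<in>P. (Mv y j)^2)" for y
    unfolding grad_q_sq_def by (simp add: partial_deriv_g power_mult_distrib sum_distrib_left)
  then have "(q y)^2 * defect y = 0" for y
    using Theta1_eq_0_and_q_constraint(2)[of y] unfolding defect_def xi_sq_def by (simp add: algebra_simps)
  then have "defect b = 0" for b by (rule defect_eq_0_if_g_sq_defect[OF w])
  then show ?thesis by unfold_locales
qed

end

text \<open>Here M is the symmetric matrix of q, and M^2 = I: H is spanned by e_k + e_m and the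
  (-1)-eigenspace of M in the \<xi>-coordinates, and H^\<bottom> by e_k - e_m and the (+1)-eigenspace.\<close>

locale eikonal_E_form_eta1_involution =
  eikonal_E_form_eta1_expansion + sym_quadratic_form_isometric P M q for M
begin

definition H where "H = {v. v $ k = v $ m \<and> (\<forall>j\<in>P. Mv v j = - v $ j)}"

definition proj_H where
  "proj_H y = (\<chi> i. if i = k \<or> i = m then (y$k + y$m) / 2 else if i \<in> P then (y$i - Mv y i) / 2 else 0)"

lemma subspace_H: "subspace H"
proof -
  have "Mv 0 j = 0" "Mv (u + v) j = Mv u j + Mv v j" for u v j
    using Mv_scale[of 0 u j] Mv_add_scale[of u 1 v j] by simp_all
  then show ?thesis unfolding subspace_def H_def by (auto simp: Mv_scale)
qed

lemma proj_H_P: assumes "i \<in> P" shows "proj_H y $ i = (y$i - Mv y i) / 2"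
proof -
  have "i \<noteq> k" "i \<noteq> m" using assms kP m_notin_P by auto
  then show ?thesis using assms by (simp add: proj_H_def)
qed

lemma proj_H_k: "proj_H y $ k = (y$k + y$m) / 2" and proj_H_m: "proj_H y $ m = (y$k + y$m) / 2"
  by (simp_all add: proj_H_def)

lemma proj_onto_H: "proj_onto H y = proj_H y"
proof (rule proj_onto_eqI)
  show "\<forall>u\<in>H. \<forall>v\<in>H. u - v \<in> H" unfolding H_def by (auto simp: Mv_diff)
  show "proj_H y \<in> H" unfolding H_def using Mv_anti_part[OF proj_H_P] by (simp add: proj_H_k proj_H_m)
  show "\<forall>h\<in>H. (y - proj_H y) \<bullet> h = 0"
  proof
    fix h assume "h \<in> H"
    then have hkm: "h $ k = h $ m" and hP: "\<And>j. j \<in> P \<Longrightarrow> Mv h j = - h $ j" unfolding H_def by auto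
    have "(y - proj_H y) \<bullet> h
        = (y - proj_H y)$k * h$k + (\<Sum>j\<in>P. (y - proj_H y)$j * h$j) + (y - proj_H y)$m * h$m"
      unfolding inner_vec_def using sum_UNIV_split[of "\<lambda>j. (y - proj_H y)$j * h$j"] by (simp add: sum_R)
    also have "(\<Sum>j\<in>P. (y - proj_H y)$j * h$j) = 0"
      using sym_part_orthogonal[OF proj_H_P hP] .
    finally show "(y - proj_H y) \<bullet> h = 0" using hkm proj_H_k proj_H_m by (simp add: algebra_simps)
  qed
qed

lemma norm_sq_proj_H: "(norm (proj_H y))^2 = ((y$k + y$m)^2 + (xi_sq y - q y)) / 2"
proof -
  have "xi_sq (proj_H y) = (xi_sq y - q y) / 2"
    using sum_sq_anti_part[OF proj_H_P] unfolding xi_sq_def .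
  then have "(norm (proj_H y))^2 = ((y$k + y$m) / 2)^2 + (xi_sq y - q y) / 2 + ((y$k + y$m) / 2)^2"
    using norm_sq_xi_eta[of "proj_H y"] by (simp add: proj_H_k proj_H_m)
  then show ?thesis by (simp add: power2_eq_square field_simps)
qed

lemma norm_sq_perp_H: "(norm (y - proj_H y))^2 = ((y$k - y$m)^2 + (xi_sq y + q y)) / 2"
proof -
  have "xi_sq (y - proj_H y) = (xi_sq y + q y) / 2"
    using sum_sq_sym_part[OF proj_H_P] unfolding xi_sq_def .
  then have "(norm (y - proj_H y))^2
      = (y$k - (y$k + y$m) / 2)^2 + (xi_sq y + q y) / 2 + (y$m - (y$k + y$m) / 2)^2"
    using norm_sq_xi_eta[of "y - proj_H y"] by (simp add: proj_H_k proj_H_m)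
  then show ?thesis by (simp add: power2_eq_square field_simps)
qed

lemma f_eq_neg_h4_H: "f x = - h4 H (Q *v x)"
proof -
  define y where "y = Q *v x"
  define A where "A = (y$k + y$m)^2 + (xi_sq y - q y)"
  define B where "B = (y$k - y$m)^2 + (xi_sq y + q y)"
  have "grad_q_sq y = 4 * (\<Sum>j\<in>P. (Mv y j)^2)"
    unfolding grad_q_sq_def by (simp add: partial_deriv_g power_mult_distrib sum_distrib_left)
  then have "grad_q_sq y = 4 * xi_sq y"
    unfolding xi_sq_def sum_Mv_sq .
  then have "4 * F y = - (A^2 - 6 * A * B + B^2)"
    unfolding F_eq A_def B_def by (simp add: power2_eq_square power4_eq_xxxx algebra_simps)
  moreover have "h4 H y = (A^2 - 6 * A * B + B^2) / 4"
    unfolding h4_eq_proj[OF proj_onto_H] norm_sq_proj_H norm_sq_perp_H A_def B_def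
    by (simp add: power2_eq_square field_simps)
  ultimately show ?thesis unfolding f_eq_F y_def by simp
qed

lemma f_primitive: "primitive f"
  unfolding primitive_def using subspace_H orth f_eq_neg_h4_H
  by (intro exI[of _ H] exI[of _ Q] exI[of _ "-1"]) simp

end

context eikonal_E_form_eta1
begin

lemma primitive_eta1: "primitive f"
proof -
  obtain q where hom_q: "hom_poly 2 P q" and psi_q: "\<And>y. \<psi> y = y$m * q y"
    using psi_eq_eta_times_quadratic by blast
  obtain \<Theta> where hom_Theta: "\<And>j. j \<le> 4 \<Longrightarrow> hom_poly (4 - j) P (\<Theta> j)"
    and theta: "\<And>y. \<theta> y = (\<Sum>j\<le>4. (y $ m) ^ j * \<Theta> j y)"
    using hom_poly_P_expand_eta[OF hom_theta] by blast
  interpret expansion: eikonal_E_form_eta1_expansion f Q P R k \<psi> \<theta> m q \<Theta>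
    by unfold_locales (use hom_q psi_q hom_Theta theta in \<open>simp_all add: numeral_eq_Suc atMost_Suc\<close>)
  show ?thesis
  proof (cases "\<forall>w. q w = 0")
    case True
    then show ?thesis using expansion.primitive_if_q_eq_0 by blast
  next
    case False
    then obtain w where w: "q w \<noteq> 0" by blast
    obtain M where "\<And>i j. M i j = M j i" "\<And>y. q y = (\<Sum>i\<in>P. \<Sum>j\<in>P. M i j * (y$i * y$j))"
      using hom_poly_2_sym_matrix[OF hom_q] by blast
    then have "sym_quadratic_form P M q" by unfold_locales
    then interpret sym_quadratic_form_isometric P M q
      using expansion.isometric_if_q_nonzero w by blast
    interpret eikonal_E_form_eta1_involution f Q P R k \<psi> \<theta> m q \<Theta> M ..
    show ?thesis by (rule f_primitive)
  qed
qed

end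

lemma primitive_if_E_class:
  fixes f :: "real^'n::finite \<Rightarrow> real"
  assumes eikonal: "\<forall>x. (norm (grad f x))^2 = 16 * (norm x)^6"
    and E: "E_class p q f" and pq: "p = 0 \<or> q = 0 \<or> q = 1"
  shows "primitive f"
proof -
  from E obtain Q P R k \<psi> \<theta> where "orthogonal_matrix Q" "P \<inter> R = {}" "k \<notin> P" "k \<notin> R"
    "P \<union> R \<union> {k} = UNIV" and cP: "card P = p" and cR: "card R = q"
    and "hom_poly 3 (P \<union> R) \<psi>" "hom_poly 4 (P \<union> R) \<theta>"
    "\<forall>x. let y = Q *v x in
          f x = (y$k)^4 + 2 * ((\<Sum>i\<in>P. (y$i)^2) - 3 * (\<Sum>i\<in>R. (y$i)^2)) * (y$k)^2 + 8 * \<psi> y * y$k + \<theta> y"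
    unfolding E_class_def by blast
  with eikonal interpret eikonal_E_form f Q P R k \<psi> \<theta> by unfold_locales
  consider "P = {}" | "R = {}" | m where "R = {m}"
    using pq cP cR by (auto simp: card_1_singleton_iff)
  then show ?thesis
  proof cases
    case (3 m)
    then interpret eikonal_E_form_eta1 f Q P R k \<psi> \<theta> m by unfold_locales
    show ?thesis by (rule primitive_eta1)
  qed (use primitive_if_P_empty primitive_if_R_empty in blast)+
qed

theorem proposition2p2:
  fixes f :: "real^'n \<Rightarrow> real"
  assumes "hom_poly 4 UNIV f"
    and "\<forall>x. (norm (grad f x))^2 = 16 * (norm x)^6"
    and "E_class 0 (CARD('n) - 1) f \<or> E_class (CARD('n) - 1) 0 f \<or> E_class (CARD('n) - 2) 1 f"
  shows "primitive f"
  using assms(3) primitive_if_E_class[OF assms(2)] by blast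

end
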